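(* Let $(X,\|\cdot\|_X)$ be a reflexive Banach space, let $G\subset\mathcal{B}(X)$ be a dislocation group on $X$ (so that $(X,G)$ is a dislocation space), and let $(u_n)_{n\in\mathbb{N}_0}$ be a bounded sequence in $X$. Then there exist $\Lambda\in\mathbb{N}\cup\{0,+\infty\}$, a subsequence $(u_{N(n)})_{n\in\mathbb{N}_0}$ (with $N:\mathbb{N}_0\to\mathbb{N}_0$ strictly increasing), elements $w^{(l)}\in X$ for $l\in\mathbb{N}_0^{<\Lambda+1}$, and operators $g^{(l)}_{N(n)}\in G$ for $l\in\mathbb{N}_0^{<\Lambda+1}$, $n\in\mathbb{Z}_{\ge l}$, such that: (i) $g^{(0)}_{N(n)}=\mathrm{Id}_X$ for all $n\ge 0$, and $w^{(l)}\neq 0$ for every $1\le l\in\mathbb{N}_0^{<\Lambda+1}$; (ii) $(g^{(l)}_{N(n)})^{-1}g^{(m)}_{N(n)}\rightharpoonup 0$ operator-weakly as $n\to\infty$ whenever $l\neq m\in\mathbb{N}_0^{<\Lambda+1}$; (iii) $(g^{(l)}_{N(n)})^{-1}u_{N(n)}\to w^{(l)}$ weakly in $X$ as $n\to\infty$, for every $l\in\mathbb{N}_0^{<\Lambda+1}$; (iv) defining, for $L\in\mathbb{N}_0^{<\Lambda+1}$ and $n\in\mathbb{Z}_{\ge L}$, the residual $r^L_{N(n)}:=u_{N(n)}-\sum_{l=0}^L g^{(l)}_{N(n)}w^{(l)}$, one has $(g^{(l)}_{N(n)})^{-1}r^L_{N(n)}\to 0$ weakly in $X$ as $n\to\infty$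 for every $0\le l\le L$. Furthermore, if either $\Lambda<\infty$, or $\Lambda=\infty$ and $\|w^{(l)}\|_X\to 0$ as $l\to\infty$, then $$\lim_{L\to\Lambda}\ \sup_{\phi\in B_{X^*}(1)}\ \limsup_{n\to\infty}\ \sup_{g\in G}\ |\langle\phi,g^{-1}r^L_{N(n)}\rangle|=0.$$
   Context: For a Banach space $X$, $\mathcal{B}(X)$ denotes the bounded linear operators on $X$, $X^*$ the dual, $\langle\cdot,\cdot\rangle$ the duality pairing, and $B_{X^*}(1)$ the closed unit ball of $X^*$. A sequence $(A_n)\subset\mathcal{B}(X)$ converges operator-strongly to $A$ if $A_nu\to Au$ in norm for every $u\in X$, and operator-weakly to $A$ (written $A_n\rightharpoonup A$) if $A_nu\to Au$ weakly in $X$ for every $u\in X$; $A_n\not\rightharpoonup 0$ means $(A_n)$ does not converge operator-weakly to $0$. Dislocation group: a group $G\subset\mathcal{B}(X)$ (under composition) of bijective linear isometries of $X$ such that (1) every sequence $(g_n)\subset G$ with $g_n\not\rightharpoonup 0$ has a subsequence converging operator-strongly (to some element of $\mathcal{B}(X)$), and (2) for every sequence $(g_n)\subset G$ with $g_n\not\rightharpoonup 0$ and every sequence $(u_n)\subset X$ with $u_n\to 0$ weakly, there is a subsequence $(n_j)$ with $g_{n_j}u_{n_j}\to 0$ weakly in $X$. The pair $(X,G)$ is then called a dislocation space. Notation: $\mathbb{N}_0=\{0,1,2,\dots\}$; $\mathbb{Z}_{\ge l}=\{n\in\mathbb{Z}:n\ge l\}$; for $\Lambda\in\mathbb{N}\cup\{0,+\infty\}$,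 $\mathbb{N}_0^{<\Lambda+1}=\{0,\dots,\Lambda\}$ if $\Lambda<\infty$ and $=\mathbb{N}_0$ if $\Lambda=\infty$; when $\Lambda<\infty$, "$\lim_{L\to\Lambda}a_L$" means $a_\Lambda$. *)

theory Defs
  imports "HOL-Analysis.Analysis" "HOL-Library.Extended_Nat" "HOL-Library.Extended_Real"
begin

definition weakly_conv :: "(nat \<Rightarrow> 'a::real_normed_vector) \<Rightarrow> 'a \<Rightarrow> bool" where
  "weakly_conv u w \<longleftrightarrow>
     (\<forall>f :: 'a \<Rightarrow>\<^sub>L real. (\<lambda>n. blinfun_apply f (u n)) \<longlonglongrightarrow> blinfun_apply f w)"

definition reflexive_space :: "'a::real_normed_vector itself \<Rightarrow> bool" where
  "reflexive_space _ \<longleftrightarrow>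
     (\<forall>\<Phi> :: ('a \<Rightarrow>\<^sub>L real) \<Rightarrow>\<^sub>L real. \<exists>x::'a. \<forall>f. blinfun_apply \<Phi> f = blinfun_apply f x)"

definition op_strong_conv :: "(nat \<Rightarrow> 'a \<Rightarrow>\<^sub>L 'a) \<Rightarrow> ('a::real_normed_vector \<Rightarrow>\<^sub>L 'a) \<Rightarrow> bool" where
  "op_strong_conv A B \<longleftrightarrow> (\<forall>x. (\<lambda>n. blinfun_apply (A n) x) \<longlonglongrightarrow> blinfun_apply B x)"

definition op_weak_conv :: "(nat \<Rightarrow> 'a \<Rightarrow>\<^sub>L 'a) \<Rightarrow> ('a::real_normed_vector \<Rightarrow>\<^sub>L 'a) \<Rightarrow> bool" where
  "op_weak_conv A B \<longleftrightarrow> (\<forall>x. weakly_conv (\<lambda>n. blinfun_apply (A n) x) (blinfun_apply B x))"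

definition dislocation_group :: "('a::real_normed_vector \<Rightarrow>\<^sub>L 'a) set \<Rightarrow> bool" where
  "dislocation_group G \<longleftrightarrow>
     (\<forall>g\<in>G. bij (blinfun_apply g) \<and> (\<forall>x. norm (blinfun_apply g x) = norm x)) \<and>
     id_blinfun \<in> G \<and>
     (\<forall>g\<in>G. \<forall>h\<in>G. g o\<^sub>L h \<in> G) \<and>
     (\<forall>g\<in>G. \<exists>h\<in>G. g o\<^sub>L h = id_blinfun \<and> h o\<^sub>L g = id_blinfun) \<and>
     (\<forall>gs. range gs \<subseteq> G \<and> \<not> op_weak_conv gs 0 \<longrightarrow>
        (\<exists>r A. strict_mono r \<and> op_strong_conv (gs \<circ> r) A)) \<and>
     (\<forall>gs us. range gs \<subseteq> G \<and> \<not> op_weak_conv gs 0 \<and> weakly_conv us 0 \<longrightarrow>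
        (\<exists>r. strict_mono r \<and> weakly_conv (\<lambda>j. blinfun_apply (gs (r j)) (us (r j))) 0))"

end

theory Submission
  imports Defs "HOL-Library.Diagonal_Subsequence"
begin

text \<open>Profiles are extracted one at a time.  By weak sequential compactness (proved below from
  reflexivity via Hahn--Banach and a diagonal argument), the current residual has, after undoing
  suitable dislocations along a subsequence, weak limits; among them one of at least half the
  maximal norm becomes the next profile.  The dislocation axioms make the new dislocations
  asymptotically orthogonal to the previous ones, so the earlier weak limits survive.  A diagonal
  subsequence serves all steps at once, and the half-maximal choice bounds the weak size of the
  remainder by twice the norm of the next profile.\<close>

section \<open>Hahn--Banach\<close>

definition sublinear :: "('a::real_vector \<Rightarrow> real) \<Rightarrow> bool" where
  "sublinear p \<longleftrightarrow>
     (\<forall>x y. p (x + y) \<le> p x + p y) \<and> (\<forall>c x. 0 \<le> c \<longrightarrow> p (c *\<^sub>R x) = c * p x)"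

text \<open>Linear functionals on subspaces are encoded by their graphs, so that Zorn's lemma can be
  applied to inclusion.\<close>
definition dominated_linear_graph :: "('a::real_vector \<Rightarrow> real) \<Rightarrow> ('a \<times> real) set \<Rightarrow> bool" where
  "dominated_linear_graph p M \<longleftrightarrow>
     (\<forall>x a b. (x, a) \<in> M \<longrightarrow> (x, b) \<in> M \<longrightarrow> a = b) \<and> (0, 0) \<in> M \<and>
     (\<forall>x a y b. (x, a) \<in> M \<longrightarrow> (y, b) \<in> M \<longrightarrow> (x + y, a + b) \<in> M) \<and>
     (\<forall>x a c. (x, a) \<in> M \<longrightarrow> (c *\<^sub>R x, c * a) \<in> M) \<and>
     (\<forall>x a. (x, a) \<in> M \<longrightarrow> a \<le> p x)"

lemma sublinearD:
  assumes "sublinear p"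
  shows sublinear_add: "p (x + y) \<le> p x + p y"
    and sublinear_scaleR: "0 \<le> c \<Longrightarrow> p (c *\<^sub>R x) = c * p x"
  using assms unfolding sublinear_def by auto

lemma sublinear_zero: "sublinear p \<Longrightarrow> p 0 = 0"
  using sublinear_scaleR[of p 0 0] by simp

lemma sublinear_scaled_norm: "0 \<le> c \<Longrightarrow> sublinear (\<lambda>x. c * norm x)"
  unfolding sublinear_def by (auto simp: norm_triangle_ineq mult_left_mono distrib_left[symmetric])

lemma dominated_linear_graphD:
  assumes "dominated_linear_graph p M"
  shows dominated_linear_graph_unique: "(x, a) \<in> M \<Longrightarrow> (x, b) \<in> M \<Longrightarrow> a = b"
    and dominated_linear_graph_zero: "(0, 0) \<in> M"
    and dominated_linear_graph_add: "(x, a) \<in> M \<Longrightarrow> (y, b) \<in> M \<Longrightarrow> (x + y, a + b) \<in> M"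
    and dominated_linear_graph_scaleR: "(x, a) \<in> M \<Longrightarrow> (c *\<^sub>R x, c * a) \<in> M"
    and dominated_linear_graph_le: "(x, a) \<in> M \<Longrightarrow> a \<le> p x"
  using assms unfolding dominated_linear_graph_def by blast+

lemma dominated_extension_constant:
  assumes p: "sublinear p" and M: "dominated_linear_graph p M"
  obtains c where "\<And>y b. (y, b) \<in> M \<Longrightarrow> b - p (y - x0) \<le> c"
    and "\<And>z d. (z, d) \<in> M \<Longrightarrow> c \<le> p (z + x0) - d"
proof
  define S where "S = {b - p (y - x0) | y b. (y, b) \<in> M}"
  have key: "b - p (y - x0) \<le> p (z + x0) - d" if "(y, b) \<in> M" "(z, d) \<in> M" for y b z d
  proof -
    have "b + d \<le> p ((y - x0) + (z + x0))"
      using dominated_linear_graph_le[OF M dominated_linear_graph_add[OF M that]] by simp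
    also have "\<dots> \<le> p (y - x0) + p (z + x0)" by (rule sublinear_add[OF p])
    finally show ?thesis by simp
  qed
  have "S \<noteq> {}" using dominated_linear_graph_zero[OF M] unfolding S_def by blast
  moreover have "bdd_above S"
    unfolding bdd_above_def S_def using key[OF _ dominated_linear_graph_zero[OF M]] by blast
  ultimately show "b - p (y - x0) \<le> Sup S" if "(y, b) \<in> M" for y b
    using that by (intro cSup_upper) (auto simp: S_def)
  show "Sup S \<le> p (z + x0) - d" if "(z, d) \<in> M" for z d
    using \<open>S \<noteq> {}\<close> key[OF _ that] by (intro cSup_least) (auto simp: S_def)
qed

lemma dominated_by_extension_constant:
  assumes p: "sublinear p" and M: "dominated_linear_graph p M" and xa: "(x, a) \<in> M"
    and lower: "\<And>y b. (y, b) \<in> M \<Longrightarrow> b - p (y - x0) \<le> c"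
    and upper: "\<And>z d. (z, d) \<in> M \<Longrightarrow> c \<le> p (z + x0) - d"
  shows "a + t * c \<le> p (x + t *\<^sub>R x0)"
proof (cases t "0 :: real" rule: linorder_cases)
  case less
  define s where "s = - t"
  have s: "s > 0" using less by (simp add: s_def)
  have "(1/s) * a - p ((1/s) *\<^sub>R x - x0) \<le> c"
    using lower[OF dominated_linear_graph_scaleR[OF M xa]] .
  then have "s * ((1/s) * a - p ((1/s) *\<^sub>R x - x0)) \<le> s * c"
    using s by (simp add: mult_left_mono)
  moreover have "s * p ((1/s) *\<^sub>R x - x0) = p (s *\<^sub>R ((1/s) *\<^sub>R x - x0))"
    using s by (simp add: sublinear_scaleR[OF p])
  moreover have "s *\<^sub>R ((1/s) *\<^sub>R x - x0) = x + t *\<^sub>R x0"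
    using s by (simp add: algebra_simps s_def)
  ultimately show ?thesis using s by (simp add: algebra_simps s_def)
next
  case equal
  then show ?thesis using dominated_linear_graph_le[OF M xa] by simp
next
  case greater
  have "c \<le> p ((1/t) *\<^sub>R x + x0) - (1/t) * a"
    using upper[OF dominated_linear_graph_scaleR[OF M xa]] .
  then have "t * c \<le> t * (p ((1/t) *\<^sub>R x + x0) - (1/t) * a)"
    using greater by (simp add: mult_left_mono)
  moreover have "t * p ((1/t) *\<^sub>R x + x0) = p (t *\<^sub>R ((1/t) *\<^sub>R x + x0))"
    using greater by (simp add: sublinear_scaleR[OF p])
  moreover have "t *\<^sub>R ((1/t) *\<^sub>R x + x0) = x + t *\<^sub>R x0"
    using greater by (simp add: algebra_simps)
  ultimately show ?thesis using greater by (simp add: algebra_simps)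
qed

lemma dominated_linear_graph_direct_sum:
  assumes M: "dominated_linear_graph p M" and x0: "\<forall>a. (x0, a) \<notin> M"
    and xa: "(x, a) \<in> M" and yb: "(y, b) \<in> M" and eq: "x + t *\<^sub>R x0 = y + t' *\<^sub>R x0"
  shows "t = t' \<and> x = y"
proof -
  have "t = t'"
  proof (rule ccontr)
    assume "t \<noteq> t'"
    have "(t - t') *\<^sub>R x0 = y - x" using eq by (simp add: algebra_simps)
    then have "inverse (t - t') *\<^sub>R ((t - t') *\<^sub>R x0) = inverse (t - t') *\<^sub>R (y - x)" by simp
    then have "x0 = inverse (t - t') *\<^sub>R (y + (-1) *\<^sub>R x)" using \<open>t \<noteq> t'\<close> by simp
    moreover have "(inverse (t - t') *\<^sub>R (y + (-1) *\<^sub>R x), inverse (t - t') * (b + (-1) * a)) \<in> M"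
      using M xa yb by (intro dominated_linear_graph_scaleR dominated_linear_graph_add) auto
    ultimately show False using x0 by simp
  qed
  with eq show ?thesis by simp
qed

lemma dominated_linear_graph_extend_by:
  assumes p: "sublinear p" and M: "dominated_linear_graph p M" and x0: "\<forall>a. (x0, a) \<notin> M"
    and lower: "\<And>y b. (y, b) \<in> M \<Longrightarrow> b - p (y - x0) \<le> c"
    and upper: "\<And>z d. (z, d) \<in> M \<Longrightarrow> c \<le> p (z + x0) - d"
  shows "dominated_linear_graph p {(x + t *\<^sub>R x0, a + t * c) | x a t. (x, a) \<in> M}"
proof -
  define M' where "M' = {(x + t *\<^sub>R x0, a + t * c) | x a t. (x, a) \<in> M}"
  show ?thesis
    unfolding M'_def[symmetric] dominated_linear_graph_def
  proof (intro conjI allI impI)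
    fix z a1 a2 assume "(z, a1) \<in> M'" "(z, a2) \<in> M'"
    then obtain x a t y b t' where xa: "(x, a) \<in> M" and yb: "(y, b) \<in> M"
      and e: "z = x + t *\<^sub>R x0" "a1 = a + t * c" "z = y + t' *\<^sub>R x0" "a2 = b + t' * c"
      unfolding M'_def by blast
    have "x + t *\<^sub>R x0 = y + t' *\<^sub>R x0" using e by simp
    then have "t = t' \<and> x = y" by (rule dominated_linear_graph_direct_sum[OF M x0 xa yb])
    then show "a1 = a2" using dominated_linear_graph_unique[OF M xa] yb e by simp
  next
    have "(0 + 0 *\<^sub>R x0, 0 + 0 * c) \<in> M'"
      unfolding M'_def using dominated_linear_graph_zero[OF M] by blast
    then show "(0, 0) \<in> M'" by simp
  next
    fix z1 a1 z2 a2 assume "(z1, a1) \<in> M'" "(z2, a2) \<in> M'"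
    then obtain x a t y b t' where "(x, a) \<in> M" "(y, b) \<in> M"
      and "z1 = x + t *\<^sub>R x0" "a1 = a + t * c" "z2 = y + t' *\<^sub>R x0" "a2 = b + t' * c"
      unfolding M'_def by blast
    then have "(z1 + z2, a1 + a2) = ((x + y) + (t + t') *\<^sub>R x0, (a + b) + (t + t') * c)"
      by (simp add: algebra_simps)
    moreover have "(x + y, a + b) \<in> M" using M \<open>(x, a) \<in> M\<close> \<open>(y, b) \<in> M\<close>
      by (rule dominated_linear_graph_add)
    ultimately show "(z1 + z2, a1 + a2) \<in> M'" unfolding M'_def by blast
  next
    fix z a1 s assume "(z, a1) \<in> M'"
    then obtain x a t where "(x, a) \<in> M" "z = x + t *\<^sub>R x0" "a1 = a + t * c"
      unfolding M'_def by blast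
    then have "(s *\<^sub>R z, s * a1) = (s *\<^sub>R x + (s * t) *\<^sub>R x0, s * a + (s * t) * c)"
      by (simp add: algebra_simps)
    moreover have "(s *\<^sub>R x, s * a) \<in> M" using M \<open>(x, a) \<in> M\<close> by (rule dominated_linear_graph_scaleR)
    ultimately show "(s *\<^sub>R z, s * a1) \<in> M'" unfolding M'_def by blast
  next
    fix z a1 assume "(z, a1) \<in> M'"
    then obtain x a t where "(x, a) \<in> M" "z = x + t *\<^sub>R x0" "a1 = a + t * c"
      unfolding M'_def by blast
    then show "a1 \<le> p z" using dominated_by_extension_constant[OF p M _ lower upper] by simp
  qed
qed

lemma dominated_linear_graph_extend:
  assumes p: "sublinear p" and M: "dominated_linear_graph p M" and x0: "\<forall>a. (x0, a) \<notin> M"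
  shows "\<exists>M'. dominated_linear_graph p M' \<and> M \<subset> M'"
proof -
  obtain c where lower: "\<And>y b. (y, b) \<in> M \<Longrightarrow> b - p (y - x0) \<le> c"
    and upper: "\<And>z d. (z, d) \<in> M \<Longrightarrow> c \<le> p (z + x0) - d"
    using dominated_extension_constant[OF p M] by blast
  define M' where "M' = {(x + t *\<^sub>R x0, a + t * c) | x a t. (x, a) \<in> M}"
  have "M \<subseteq> M'" unfolding M'_def by force
  moreover have "(0 + 1 *\<^sub>R x0, 0 + 1 * c) \<in> M'"
    unfolding M'_def using dominated_linear_graph_zero[OF M] by blast
  ultimately have "M \<subset> M'" using x0 by auto
  moreover have "dominated_linear_graph p M'"
    unfolding M'_def using dominated_linear_graph_extend_by[OF p M x0 lower upper] .
  ultimately show ?thesis by blast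
qed

lemma dominated_linear_graph_Union:
  assumes "C \<noteq> {}" "chain\<^sub>\<subseteq> C" "\<And>M. M \<in> C \<Longrightarrow> dominated_linear_graph p M"
  shows "dominated_linear_graph p (\<Union>C)"
proof -
  have two: "\<exists>M\<in>C. (x, a) \<in> M \<and> (y, b) \<in> M" if "(x, a) \<in> \<Union>C" "(y, b) \<in> \<Union>C" for x a y b
    using that assms(2) unfolding chain_subset_def by blast
  show ?thesis
    unfolding dominated_linear_graph_def
  proof (intro conjI allI impI)
    show "a = b" if xab: "(x, a) \<in> \<Union>C" "(x, b) \<in> \<Union>C" for x a b
    proof -
      obtain M where "M \<in> C" "(x, a) \<in> M" "(x, b) \<in> M" using two[OF xab] by blast
      then show "a = b" using assms(3) dominated_linear_graph_unique by blast
    qed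
    show "(0, 0) \<in> \<Union>C" using assms(1,3) dominated_linear_graph_zero by blast
    show "(x + y, a + b) \<in> \<Union>C" if "(x, a) \<in> \<Union>C" "(y, b) \<in> \<Union>C" for x a y b
      using two[OF that] assms(3) dominated_linear_graph_add by blast
    show "(c *\<^sub>R x, c * a) \<in> \<Union>C" if "(x, a) \<in> \<Union>C" for x a c
      using that assms(3) dominated_linear_graph_scaleR by blast
    show "a \<le> p x" if "(x, a) \<in> \<Union>C" for x a
      using that assms(3) dominated_linear_graph_le by blast
  qed
qed

theorem hahn_banach_graph:
  assumes p: "sublinear p" and M0: "dominated_linear_graph p M0"
  shows "\<exists>F. linear F \<and> (\<forall>(x, a)\<in>M0. F x = a) \<and> (\<forall>x. F x \<le> p x)"
proof -
  define A where "A = {M. dominated_linear_graph p M \<and> M0 \<subseteq> M}"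
  have "\<exists>U\<in>A. \<forall>M\<in>C. M \<subseteq> U" if "C \<in> chains A" for C
  proof (cases "C = {}")
    case True
    then show ?thesis using M0 unfolding A_def by auto
  next
    case False
    with that have "dominated_linear_graph p (\<Union>C)" "M0 \<subseteq> \<Union>C"
      unfolding chains_def A_def by (auto intro!: dominated_linear_graph_Union)
    then show ?thesis unfolding A_def by blast
  qed
  then obtain M where "M \<in> A" and max: "\<forall>X\<in>A. M \<subseteq> X \<longrightarrow> X = M"
    using Zorn_Lemma2[of A] by blast
  then have M: "dominated_linear_graph p M" and "M0 \<subseteq> M" unfolding A_def by auto
  have total: "\<exists>a. (x, a) \<in> M" for x
  proof (rule ccontr)
    assume "\<nexists>a. (x, a) \<in> M"
    then obtain M' where "dominated_linear_graph p M'" "M \<subset> M'"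
      using dominated_linear_graph_extend[OF p M] by blast
    moreover from this have "M' \<in> A" using \<open>M0 \<subseteq> M\<close> unfolding A_def by auto
    ultimately show False using max by blast
  qed
  define F where "F x = (THE a. (x, a) \<in> M)" for x
  have F: "(x, a) \<in> M \<Longrightarrow> F x = a" for x a
    unfolding F_def using dominated_linear_graph_unique[OF M] by (intro the_equality) blast+
  have FM: "(x, F x) \<in> M" for x
    using total[of x] F by blast
  have "F (x + y) = F x + F y" for x y
    by (rule F) (rule dominated_linear_graph_add[OF M FM FM])
  moreover have "F (c *\<^sub>R x) = c * F x" for c x
    by (rule F) (rule dominated_linear_graph_scaleR[OF M FM])
  ultimately have "linear F" by (auto intro: linearI)
  then show ?thesis using F FM \<open>M0 \<subseteq> M\<close> dominated_linear_graph_le[OF M] by blast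
qed

lemma hahn_banach_subspace:
  fixes p :: "'a::real_vector \<Rightarrow> real"
  assumes p: "sublinear p" and nonneg: "\<And>z. 0 \<le> p z" and S: "subspace S"
    and far: "\<And>h. h \<in> S \<Longrightarrow> \<delta> \<le> p (g - h)" and \<delta>: "0 < \<delta>"
  shows "\<exists>F. linear F \<and> (\<forall>h\<in>S. F h = 0) \<and> F g = \<delta> \<and> (\<forall>z. F z \<le> p z)"
proof -
  define M where "M = {(h, 0 :: real) | h. h \<in> S}"
  have M: "dominated_linear_graph p M"
    unfolding M_def dominated_linear_graph_def
    using S nonneg by (auto simp: subspace_0 subspace_add subspace_scale)
  have "g \<notin> S" using far[of g] \<delta> sublinear_zero[OF p] by auto
  then have g: "\<forall>a. (g, a) \<notin> M" unfolding M_def by blast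
  have lower: "b - p (y - g) \<le> \<delta>" if "(y, b) \<in> M" for y b
    using that nonneg[of "y - g"] \<delta> unfolding M_def by auto
  have upper: "\<delta> \<le> p (z + g) - d" if "(z, d) \<in> M" for z d
  proof -
    have "- z \<in> S" "d = 0" using that S unfolding M_def by (auto simp: subspace_neg)
    then show ?thesis using far[of "- z"] by (simp add: add.commute)
  qed
  define M' where "M' = {(x + t *\<^sub>R g, a + t * \<delta>) | x a t. (x, a) \<in> M}"
  obtain F where "linear F" and F: "\<forall>(x, a)\<in>M'. F x = a" and "\<forall>z. F z \<le> p z"
    using hahn_banach_graph[OF p dominated_linear_graph_extend_by[OF p M g lower upper]]
    unfolding M'_def by blast
  moreover have "F h = 0" if "h \<in> S" for h
  proof -
    have "(h + 0 *\<^sub>R g, 0 + 0 * \<delta>) \<in> M'" using that unfolding M'_def M_def by blast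
    then show ?thesis using F by auto
  qed
  moreover have "(0 + 1 *\<^sub>R g, 0 + 1 * \<delta>) \<in> M'"
    using subspace_0[OF S] unfolding M'_def M_def by blast
  then have "F g = \<delta>" using F by auto
  ultimately show ?thesis by blast
qed

lemma linear_dominated_by_norm:
  fixes F :: "'a::real_normed_vector \<Rightarrow> real"
  assumes "linear F" "\<And>z. F z \<le> c * norm z"
  shows linear_dominated_by_norm_abs: "\<bar>F z\<bar> \<le> c * norm z"
    and linear_dominated_by_norm_bounded: "bounded_linear F"
proof -
  show abs: "\<bar>F z\<bar> \<le> c * norm z" for z
    using assms(2)[of z] assms(2)[of "- z"] linear_neg[OF assms(1), of z] by (simp add: abs_le_iff)
  show "bounded_linear F"
  proof (rule bounded_linear_intro[where K = c])
    show "F (x + y) = F x + F y" "F (r *\<^sub>R x) = r *\<^sub>R F x" for x y r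
      using linear_add[OF assms(1)] linear_scale[OF assms(1)] by auto
    show "norm (F x) \<le> norm x * c" for x
      using abs[of x] by (simp add: mult.commute)
  qed
qed

lemma exists_norming_functional:
  fixes x :: "'a::real_normed_vector"
  shows "\<exists>f::'a \<Rightarrow>\<^sub>L real. norm f \<le> 1 \<and> blinfun_apply f x = norm x"
proof (cases "x = 0")
  case True
  then show ?thesis by (intro exI[of _ 0]) simp
next
  case False
  obtain F where "linear F" "F x = norm x" "\<forall>z. F z \<le> 1 * norm z"
    using hahn_banach_subspace[OF sublinear_scaled_norm[of 1] _ subspace_single_0, where g = x and \<delta> = "norm x"]
      False by auto
  then have "bounded_linear F" "\<And>z. \<bar>F z\<bar> \<le> 1 * norm z" "F x = norm x"
    using linear_dominated_by_norm by blast+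
  then show ?thesis
    by (intro exI[of _ "Blinfun F"]) (auto simp: bounded_linear_Blinfun_apply intro!: norm_blinfun_bound)
qed

lemma exists_functional_vanishing_on_closed_subspace:
  fixes x :: "'a::real_normed_vector"
  assumes S: "subspace S" "closed S" and x: "x \<notin> S"
  shows "\<exists>f::'a \<Rightarrow>\<^sub>L real. (\<forall>y\<in>S. blinfun_apply f y = 0) \<and> blinfun_apply f x \<noteq> 0"
proof -
  have d: "infdist x S > 0"
    using infdist_pos_not_in_closed[OF S(2) _ x] subspace_0[OF S(1)] by blast
  have "infdist x S \<le> 1 * norm (x - h)" if "h \<in> S" for h
    using infdist_le[OF that, of x] by (simp add: dist_norm)
  from hahn_banach_subspace[OF sublinear_scaled_norm[of 1] _ S(1) this d]
  obtain F where "linear F" "\<forall>h\<in>S. F h = 0" "F x = infdist x S" "\<forall>z. F z \<le> 1 * norm z"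
    by auto
  moreover from this have "bounded_linear F" using linear_dominated_by_norm_bounded by blast
  ultimately show ?thesis
    using d by (intro exI[of _ "Blinfun F"]) (auto simp: bounded_linear_Blinfun_apply)
qed

lemma zero_if_functionals_vanish:
  fixes x :: "'a::real_normed_vector"
  assumes "\<And>f::'a \<Rightarrow>\<^sub>L real. blinfun_apply f x = 0"
  shows "x = 0"
  using exists_norming_functional[of x] assms by auto

section \<open>Weak convergence\<close>

lemma abs_blinfun_apply_le: "\<bar>blinfun_apply f x\<bar> \<le> norm f * norm x"
  using norm_blinfun[of f x] by simp

lemma weakly_conv_subseq:
  assumes "weakly_conv v w" "strict_mono s"
  shows "weakly_conv (\<lambda>n. v (s n)) w"
  unfolding weakly_conv_def
proof
  fix f :: "'a \<Rightarrow>\<^sub>L real"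
  have "(\<lambda>n. blinfun_apply f (v n)) \<longlonglongrightarrow> blinfun_apply f w"
    using assms(1) unfolding weakly_conv_def by blast
  from LIMSEQ_subseq_LIMSEQ[OF this assms(2)]
  show "(\<lambda>n. blinfun_apply f (v (s n))) \<longlonglongrightarrow> blinfun_apply f w" by (simp add: o_def)
qed

lemma weakly_conv_eventually_eq:
  assumes "weakly_conv v w" "\<And>n. n \<ge> m \<Longrightarrow> v' n = v n"
  shows "weakly_conv v' w"
  unfolding weakly_conv_def
proof
  fix f :: "'a \<Rightarrow>\<^sub>L real"
  have "eventually (\<lambda>n. blinfun_apply f (v n) = blinfun_apply f (v' n)) sequentially"
    unfolding eventually_sequentially using assms(2) by (intro exI[of _ m]) simp
  moreover have "(\<lambda>n. blinfun_apply f (v n)) \<longlonglongrightarrow> blinfun_apply f w"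
    using assms(1) unfolding weakly_conv_def by blast
  ultimately show "(\<lambda>n. blinfun_apply f (v' n)) \<longlonglongrightarrow> blinfun_apply f w"
    by (rule Lim_transform_eventually[rotated])
qed

lemma weakly_conv_const: "weakly_conv (\<lambda>n. c) c"
  unfolding weakly_conv_def by simp

lemma weakly_conv_add:
  "weakly_conv v w \<Longrightarrow> weakly_conv v' w' \<Longrightarrow> weakly_conv (\<lambda>n. v n + v' n) (w + w')"
  unfolding weakly_conv_def by (simp add: blinfun.add_right tendsto_add)

lemma weakly_conv_diff:
  "weakly_conv v w \<Longrightarrow> weakly_conv v' w' \<Longrightarrow> weakly_conv (\<lambda>n. v n - v' n) (w - w')"
  unfolding weakly_conv_def by (simp add: blinfun.diff_right tendsto_diff)

lemma weakly_conv_sum: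
  "finite I \<Longrightarrow> (\<And>i. i \<in> I \<Longrightarrow> weakly_conv (v i) (w i)) \<Longrightarrow>
    weakly_conv (\<lambda>n. \<Sum>i\<in>I. v i n) (\<Sum>i\<in>I. w i)"
  by (induct I rule: finite_induct) (simp_all add: weakly_conv_const weakly_conv_add)

lemma weakly_conv_unique:
  fixes v :: "nat \<Rightarrow> 'a::real_normed_vector"
  assumes "weakly_conv v w" "weakly_conv v w'"
  shows "w = w'"
proof -
  have "blinfun_apply f w = blinfun_apply f w'" for f :: "'a \<Rightarrow>\<^sub>L real"
    using assms unfolding weakly_conv_def by (meson LIMSEQ_unique)
  then have "blinfun_apply f (w - w') = 0" for f :: "'a \<Rightarrow>\<^sub>L real"
    by (simp add: blinfun.diff_right)
  then show ?thesis using zero_if_functionals_vanish[of "w - w'"] by simp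
qed

lemma tendsto_imp_weakly_conv: "v \<longlonglongrightarrow> w \<Longrightarrow> weakly_conv v w"
  unfolding weakly_conv_def by (auto intro: blinfun.tendsto)

lemma weakly_conv_norm_le:
  fixes v :: "nat \<Rightarrow> 'a::real_normed_vector"
  assumes "weakly_conv v w" "\<And>n. norm (v n) \<le> c"
  shows "norm w \<le> c"
proof -
  obtain f :: "'a \<Rightarrow>\<^sub>L real" where f: "norm f \<le> 1" "blinfun_apply f w = norm w"
    using exists_norming_functional by blast
  have lim: "(\<lambda>n. blinfun_apply f (v n)) \<longlonglongrightarrow> norm w"
    using assms(1) f(2) unfolding weakly_conv_def by metis
  have bound: "blinfun_apply f (v n) \<le> c" for n
  proof -
    have "blinfun_apply f (v n) \<le> norm f * norm (v n)" using abs_blinfun_apply_le[of f "v n"] by linarith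
    also have "\<dots> \<le> norm (v n)" using f(1) by (simp add: mult_left_le_one_le)
    finally show ?thesis using assms(2)[of n] by simp
  qed
  show ?thesis using bound by (intro LIMSEQ_le_const2[OF lim]) auto
qed

section \<open>Weak sequential compactness in reflexive spaces\<close>

text \<open>Rational combinations of the \<open>u n\<close>, indexed by lists so that their set is countable.\<close>
primrec rat_combination :: "(nat \<Rightarrow> 'a::real_vector) \<Rightarrow> (rat \<times> nat) list \<Rightarrow> 'a" where
  "rat_combination u [] = 0"
| "rat_combination u (qi # l) = of_rat (fst qi) *\<^sub>R u (snd qi) + rat_combination u l"

lemma rat_combination_append:
  "rat_combination u (l1 @ l2) = rat_combination u l1 + rat_combination u l2"
  by (induct l1) (auto simp: algebra_simps)

lemma rat_combination_scale:
  "rat_combination u (map (\<lambda>(q, i). (r * q, i)) l) = of_rat r *\<^sub>R rat_combination u l"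
  by (induct l) (auto simp: algebra_simps of_rat_mult)

lemma subspace_closure_rat_closed:
  fixes D :: "'a::real_normed_vector set"
  assumes "0 \<in> D" and add: "\<And>x y. x \<in> D \<Longrightarrow> y \<in> D \<Longrightarrow> x + y \<in> D"
    and scale: "\<And>q x. x \<in> D \<Longrightarrow> of_rat q *\<^sub>R x \<in> D"
  shows "subspace (closure D)"
  unfolding subspace_def
proof (intro conjI ballI allI)
  show "0 \<in> closure D" using \<open>0 \<in> D\<close> closure_subset by blast
next
  fix x y assume "x \<in> closure D" "y \<in> closure D"
  then obtain a b where "\<forall>n. a n \<in> D" "a \<longlonglongrightarrow> x" "\<forall>n. b n \<in> D" "b \<longlonglongrightarrow> y"
    unfolding closure_sequential by blast
  then have "\<forall>n. a n + b n \<in> D" "(\<lambda>n. a n + b n) \<longlonglongrightarrow> x + y"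
    using add by (auto intro: tendsto_add)
  then show "x + y \<in> closure D"
    unfolding closure_sequential by (intro exI[of _ "\<lambda>n. a n + b n"]) simp
next
  fix c :: real and x assume "x \<in> closure D"
  then obtain a where a: "\<forall>n. a n \<in> D" "a \<longlonglongrightarrow> x"
    unfolding closure_sequential by blast
  have "c \<in> closure \<rat>" using Rats_closure_real by simp
  then obtain r where r: "\<forall>n. r n \<in> \<rat>" "r \<longlonglongrightarrow> c"
    unfolding closure_sequential by blast
  have "r n *\<^sub>R a n \<in> D" for n
  proof -
    obtain q where "r n = of_rat q" using r(1) Rats_cases by blast
    then show ?thesis using a(1) scale by simp
  qed
  moreover have "(\<lambda>n. r n *\<^sub>R a n) \<longlonglongrightarrow> c *\<^sub>R x" using a r by (intro tendsto_scaleR)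
  ultimately show "c *\<^sub>R x \<in> closure D"
    unfolding closure_sequential by (intro exI[of _ "\<lambda>n. r n *\<^sub>R a n"]) simp
qed

lemma subspace_closure_rat_combinations:
  fixes u :: "nat \<Rightarrow> 'a::real_normed_vector"
  shows "subspace (closure (range (rat_combination u)))"
proof (rule subspace_closure_rat_closed)
  show "0 \<in> range (rat_combination u)" using rangeI[of "rat_combination u" "[]"] by simp
next
  fix x y assume "x \<in> range (rat_combination u)" "y \<in> range (rat_combination u)"
  then obtain l1 l2 where "x = rat_combination u l1" "y = rat_combination u l2" by blast
  then have "x + y = rat_combination u (l1 @ l2)" by (simp add: rat_combination_append)
  then show "x + y \<in> range (rat_combination u)" by blast
next
  fix q x assume "x \<in> range (rat_combination u)"
  then obtain l where "x = rat_combination u l" by blast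
  then have "of_rat q *\<^sub>R x = rat_combination u (map (\<lambda>(p, i). (q * p, i)) l)"
    by (simp add: rat_combination_scale)
  then show "of_rat q *\<^sub>R x \<in> range (rat_combination u)" by blast
qed

text \<open>The weak limit of a subsequence is obtained by making the functionals converge on a countable
  set that is dense for this seminorm.\<close>
definition dual_seminorm :: "(nat \<Rightarrow> 'a::real_normed_vector) \<Rightarrow> ('a \<Rightarrow>\<^sub>L real) \<Rightarrow> real" where
  "dual_seminorm u f = (SUP n. \<bar>blinfun_apply f (u n)\<bar>)"

context
  fixes u :: "nat \<Rightarrow> 'a::real_normed_vector" and B :: real
  assumes u_bound: "\<And>n. norm (u n) \<le> B"
begin

lemma abs_apply_le_norm_bound: "\<bar>blinfun_apply f (u n)\<bar> \<le> norm f * B"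
  using abs_blinfun_apply_le[of f "u n"] u_bound[of n] by (meson mult_left_mono norm_ge_zero order_trans)

lemma dual_seminorm_ge: "\<bar>blinfun_apply f (u n)\<bar> \<le> dual_seminorm u f"
  unfolding dual_seminorm_def
  by (rule cSUP_upper[OF UNIV_I], rule bdd_aboveI2[where M = "norm f * B"])
    (rule abs_apply_le_norm_bound)

lemma dual_seminorm_least: "(\<And>n. \<bar>blinfun_apply f (u n)\<bar> \<le> c) \<Longrightarrow> dual_seminorm u f \<le> c"
  unfolding dual_seminorm_def by (rule cSUP_least) auto

lemma dual_seminorm_nonneg: "0 \<le> dual_seminorm u f"
  using dual_seminorm_ge[of f 0] by linarith

lemma dual_seminorm_le_norm: "dual_seminorm u f \<le> B * norm f"
  using abs_apply_le_norm_bound by (intro dual_seminorm_least) (simp add: mult.commute)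

lemma dual_seminorm_minus: "dual_seminorm u (- f) = dual_seminorm u f"
  unfolding dual_seminorm_def by (simp add: blinfun.minus_left)

lemma sublinear_dual_seminorm: "sublinear (dual_seminorm u)"
  unfolding sublinear_def
proof (intro conjI allI impI)
  fix f g :: "'a \<Rightarrow>\<^sub>L real"
  show "dual_seminorm u (f + g) \<le> dual_seminorm u f + dual_seminorm u g"
    using dual_seminorm_ge[of f] dual_seminorm_ge[of g]
    by (intro dual_seminorm_least) (smt (verit) blinfun.add_left)
next
  fix c :: real and f :: "'a \<Rightarrow>\<^sub>L real"
  assume "0 \<le> c"
  have scale: "\<bar>blinfun_apply (c *\<^sub>R f) (u n)\<bar> = c * \<bar>blinfun_apply f (u n)\<bar>" for n
    using \<open>0 \<le> c\<close> by (simp add: blinfun.scaleR_left abs_mult)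
  show "dual_seminorm u (c *\<^sub>R f) = c * dual_seminorm u f"
  proof (cases "c = 0")
    case True
    then show ?thesis
      using dual_seminorm_least[of 0 0] dual_seminorm_nonneg[of 0] by simp
  next
    case False
    with \<open>0 \<le> c\<close> have "0 < c" by simp
    have "dual_seminorm u (c *\<^sub>R f) \<le> c * dual_seminorm u f"
      using dual_seminorm_ge[of f] \<open>0 \<le> c\<close> by (intro dual_seminorm_least) (simp add: scale mult_left_mono)
    moreover have "dual_seminorm u f \<le> dual_seminorm u (c *\<^sub>R f) / c"
      using dual_seminorm_ge[of "c *\<^sub>R f"] \<open>0 < c\<close>
      by (intro dual_seminorm_least) (simp add: scale field_simps)
    ultimately show ?thesis using \<open>0 < c\<close> by (simp add: field_simps)
  qed
qed

end

lemma zero_if_norming_functionals_vanish: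
  fixes x :: "'a::real_normed_vector"
  assumes x: "x \<in> closure D"
    and norming: "\<And>d. d \<in> D \<Longrightarrow> \<exists>f\<in>Fs. norm f \<le> 1 \<and> blinfun_apply f d = norm d"
    and vanish: "\<And>f. f \<in> Fs \<Longrightarrow> blinfun_apply f x = 0"
  shows "x = 0"
proof (rule ccontr)
  assume "x \<noteq> 0"
  then obtain d where "d \<in> D" and d: "dist d x < norm x / 2"
    using x unfolding closure_approachable by (meson half_gt_zero zero_less_norm_iff)
  obtain f where "f \<in> Fs" "norm f \<le> 1" "blinfun_apply f d = norm d"
    using norming[OF \<open>d \<in> D\<close>] by blast
  then have "norm d = blinfun_apply f (d - x)" using vanish by (simp add: blinfun.diff_right)
  also have "\<dots> \<le> norm f * norm (d - x)" using abs_blinfun_apply_le[of f "d - x"] by linarith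
  also have "\<dots> \<le> norm (d - x)" using \<open>norm f \<le> 1\<close> by (simp add: mult_left_le_one_le)
  finally have "norm x \<le> 2 * norm (d - x)" using norm_triangle_ineq4[of d "d - x"] by simp
  then show False using d by (simp add: dist_norm)
qed

text \<open>Hahn--Banach for \<open>dual_seminorm u\<close> produces a functional on the dual space;
  reflexivity turns it into a point of \<open>X\<close>, which lies in the closed span of the sequence and is
  annihilated by the norming functionals, hence vanishes.\<close>
lemma reflexive_norming_span_dense:
  fixes u :: "nat \<Rightarrow> 'a::real_normed_vector"
  assumes refl: "reflexive_space TYPE('a)" and u: "\<And>n. norm (u n) \<le> B"
    and Y: "subspace Y" "closed Y" "\<And>n. u n \<in> Y" "Y \<subseteq> closure D"
    and norming: "\<And>d. d \<in> D \<Longrightarrow> \<exists>f\<in>Fs. norm f \<le> 1 \<and> blinfun_apply f d = norm d"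
    and \<epsilon>: "0 < \<epsilon>"
  shows "\<exists>h\<in>span Fs. dual_seminorm u (g - h) < \<epsilon>"
proof (rule ccontr)
  assume "\<not> ?thesis"
  then have far: "\<And>h. h \<in> span Fs \<Longrightarrow> \<epsilon> \<le> dual_seminorm u (g - h)" by (simp add: not_less)
  obtain F where "linear F" and F0: "\<forall>h\<in>span Fs. F h = 0" and "F g = \<epsilon>"
    and Fle: "\<forall>f. F f \<le> dual_seminorm u f"
    using hahn_banach_subspace[OF sublinear_dual_seminorm[where u = u, OF u] dual_seminorm_nonneg[where u = u, OF u]
        subspace_span far \<epsilon>] by blast
  have "F f \<le> B * norm f" for f
    using order_trans[OF spec[OF Fle] dual_seminorm_le_norm[where u = u, OF u]] .
  then have "bounded_linear F" by (rule linear_dominated_by_norm_bounded[OF \<open>linear F\<close>])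
  have Fabs: "\<bar>F f\<bar> \<le> dual_seminorm u f" for f
    using Fle[rule_format, of f] Fle[rule_format, of "- f"] linear_neg[OF \<open>linear F\<close>, of f]
      dual_seminorm_minus[where u = u, OF u, of f]
    by (simp add: abs_le_iff)
  obtain x where "\<forall>f. blinfun_apply (Blinfun F) f = blinfun_apply f x"
    using refl unfolding reflexive_space_def by blast
  then have x: "F f = blinfun_apply f x" for f
    using \<open>bounded_linear F\<close> by (simp add: bounded_linear_Blinfun_apply)
  have "x \<in> Y"
  proof (rule ccontr)
    assume "x \<notin> Y"
    then obtain f :: "'a \<Rightarrow>\<^sub>L real" where f: "\<forall>y\<in>Y. blinfun_apply f y = 0" "blinfun_apply f x \<noteq> 0"
      using exists_functional_vanishing_on_closed_subspace[OF Y(1,2)] by blast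
    have "dual_seminorm u f \<le> 0" using f(1) Y(3) by (intro dual_seminorm_least[where u = u, OF u]) simp
    then show False using Fabs[of f] f(2) x[of f] by simp
  qed
  moreover have "blinfun_apply f x = 0" if "f \<in> Fs" for f
    using F0 span_base[OF that] x[of f] by simp
  ultimately have "x = 0"
    using zero_if_norming_functionals_vanish[OF _ norming] Y(4) by blast
  then show False using \<open>F g = \<epsilon>\<close> x[of g] \<epsilon> by simp
qed

lemma subseq_functionals_convergent:
  fixes e :: "nat \<Rightarrow> 'a::real_normed_vector \<Rightarrow>\<^sub>L real" and u :: "nat \<Rightarrow> 'a"
  assumes u: "\<And>n. norm (u n) \<le> B"
  shows "\<exists>s. strict_mono s \<and> (\<forall>k. convergent (\<lambda>n. blinfun_apply (e k) (u (s n))))"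
proof -
  interpret subseqs "\<lambda>k s. convergent (\<lambda>n. blinfun_apply (e k) (u (s n)))"
  proof
    fix k and s :: "nat \<Rightarrow> nat"
    have "bounded (range (\<lambda>n. blinfun_apply (e k) (u (s n))))"
      using abs_apply_le_norm_bound[where u = u, OF u] unfolding bounded_iff by auto
    then obtain l r where "strict_mono r" "((\<lambda>n. blinfun_apply (e k) (u (s n))) \<circ> r) \<longlonglongrightarrow> l"
      using bounded_imp_convergent_subsequence by blast
    then show "\<exists>r'. strict_mono r' \<and> convergent (\<lambda>n. blinfun_apply (e k) (u ((s \<circ> r') n)))"
      unfolding convergent_def by (auto simp: o_def)
  qed
  have "convergent (\<lambda>n. blinfun_apply (e k) (u (diagseq n)))" for k
  proof -
    have "convergent (\<lambda>n. blinfun_apply (e k) (u ((diagseq \<circ> (+) (Suc k)) n)))"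
    proof (rule diagseq_holds)
      fix r s' j assume "strict_mono (r :: nat \<Rightarrow> nat)"
        and "convergent (\<lambda>n. blinfun_apply (e j) (u (s' n)))"
      then show "convergent (\<lambda>n. blinfun_apply (e j) (u ((s' \<circ> r) n)))"
        unfolding convergent_def using LIMSEQ_subseq_LIMSEQ by (fastforce simp: o_def)
    qed
    then show ?thesis
      using convergent_ignore_initial_segment[of "\<lambda>n. blinfun_apply (e k) (u (diagseq n))" "Suc k"]
      by (simp add: o_def add.commute)
  qed
  then show ?thesis using subseq_diagseq by blast
qed

lemma subspace_convergent_functionals:
  "subspace {h :: 'a::real_normed_vector \<Rightarrow>\<^sub>L real. convergent (\<lambda>n. blinfun_apply h (v n))}"
  unfolding subspace_def
  by (auto simp: blinfun.add_left blinfun.scaleR_left convergent_const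
      intro: convergent_add convergent_mult[OF convergent_const])

lemma convergent_functional_if_approximable:
  fixes u :: "nat \<Rightarrow> 'a::real_normed_vector"
  assumes u: "\<And>n. norm (u n) \<le> B"
    and conv: "\<And>h. h \<in> H \<Longrightarrow> convergent (\<lambda>n. blinfun_apply h (u (s n)))"
    and approx: "\<And>\<epsilon>. 0 < \<epsilon> \<Longrightarrow> \<exists>h\<in>H. dual_seminorm u (g - h) < \<epsilon>"
  shows "convergent (\<lambda>n. blinfun_apply g (u (s n)))"
  unfolding Cauchy_convergent_iff[symmetric]
proof (rule CauchyI)
  fix \<epsilon> :: real assume "0 < \<epsilon>"
  then obtain h where "h \<in> H" and h: "dual_seminorm u (g - h) < \<epsilon> / 3"
    using approx[of "\<epsilon> / 3"] by auto
  have "Cauchy (\<lambda>n. blinfun_apply h (u (s n)))"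
    using conv[OF \<open>h \<in> H\<close>] by (simp add: Cauchy_convergent_iff)
  then obtain M where M: "\<And>m n. M \<le> m \<Longrightarrow> M \<le> n \<Longrightarrow>
      norm (blinfun_apply h (u (s m)) - blinfun_apply h (u (s n))) < \<epsilon> / 3"
    using \<open>0 < \<epsilon>\<close> unfolding Cauchy_iff by (meson divide_pos_pos zero_less_numeral)
  have gh: "\<bar>blinfun_apply g (u k) - blinfun_apply h (u k)\<bar> < \<epsilon> / 3" for k
    using dual_seminorm_ge[where u = u, OF u, of "g - h" k] h by (simp add: blinfun.diff_left)
  have "norm (blinfun_apply g (u (s m)) - blinfun_apply g (u (s n))) < \<epsilon>"
    if "M \<le> m" "M \<le> n" for m n
    using M[OF that] gh[of "s m"] gh[of "s n"] unfolding real_norm_def abs_less_iff by linarith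
  then show "\<exists>M. \<forall>m\<ge>M. \<forall>n\<ge>M. norm (blinfun_apply g (u (s m)) - blinfun_apply g (u (s n))) < \<epsilon>"
    by blast
qed

lemma weakly_conv_if_functionals_convergent:
  fixes v :: "nat \<Rightarrow> 'a::real_normed_vector"
  assumes refl: "reflexive_space TYPE('a)" and v: "\<And>n. norm (v n) \<le> B"
    and conv: "\<And>f :: 'a \<Rightarrow>\<^sub>L real. convergent (\<lambda>n. blinfun_apply f (v n))"
  shows "\<exists>w. weakly_conv v w"
proof -
  define \<Phi> where "\<Phi> f = lim (\<lambda>n. blinfun_apply f (v n))" for f :: "'a \<Rightarrow>\<^sub>L real"
  have \<Phi>: "(\<lambda>n. blinfun_apply f (v n)) \<longlonglongrightarrow> \<Phi> f" for f
    unfolding \<Phi>_def using conv convergent_LIMSEQ_iff by blast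
  have "bounded_linear \<Phi>"
  proof (rule bounded_linear_intro[where K = B])
    show "\<Phi> (f1 + f2) = \<Phi> f1 + \<Phi> f2" for f1 f2
      using \<Phi>[of "f1 + f2"] tendsto_add[OF \<Phi>[of f1] \<Phi>[of f2]]
      by (simp add: blinfun.add_left LIMSEQ_unique)
    show "\<Phi> (r *\<^sub>R f) = r *\<^sub>R \<Phi> f" for r f
      using \<Phi>[of "r *\<^sub>R f"] tendsto_scaleR[OF tendsto_const \<Phi>[of f], of r]
      by (simp add: blinfun.scaleR_left LIMSEQ_unique)
    show "norm (\<Phi> f) \<le> norm f * B" for f
      unfolding real_norm_def using abs_apply_le_norm_bound[where u = v, OF v]
      by (intro LIMSEQ_le_const2[OF tendsto_rabs[OF \<Phi>[of f]]]) auto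
  qed
  moreover obtain w where "\<forall>f. blinfun_apply (Blinfun \<Phi>) f = blinfun_apply f w"
    using refl unfolding reflexive_space_def by blast
  ultimately have "weakly_conv v w"
    unfolding weakly_conv_def using \<Phi> by (simp add: bounded_linear_Blinfun_apply)
  then show ?thesis by blast
qed

text \<open>The norming functionals of the countable set of rational combinations of the \<open>u n\<close> are made
  convergent by a diagonal argument; their span is dense for \<open>dual_seminorm u\<close>, so every functional
  converges, and reflexivity provides the weak limit.\<close>
theorem weakly_convergent_subsequence:
  fixes u :: "nat \<Rightarrow> 'a::real_normed_vector"
  assumes refl: "reflexive_space TYPE('a)" and bnd: "bounded (range u)"
  shows "\<exists>s w. strict_mono s \<and> weakly_conv (\<lambda>n. u (s n)) w"
proof -
  obtain B where u: "\<And>n. norm (u n) \<le> B" using bnd unfolding bounded_iff by blast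
  define D where "D = range (rat_combination u)"
  have "u n \<in> D" for n
    using rangeI[of "rat_combination u" "[(1, n)]"] unfolding D_def by simp
  then have uD: "u n \<in> closure D" for n by (rule subsetD[OF closure_subset])
  have "\<forall>d. \<exists>f::'a \<Rightarrow>\<^sub>L real. norm f \<le> 1 \<and> blinfun_apply f d = norm d"
    using exists_norming_functional by blast
  from choice[OF this] obtain nf :: "'a \<Rightarrow> 'a \<Rightarrow>\<^sub>L real" where nf: "\<forall>d. norm (nf d) \<le> 1 \<and> blinfun_apply (nf d) d = norm d"
    by blast
  define Fs where "Fs = nf ` D"
  have "countable Fs" "Fs \<noteq> {}" unfolding Fs_def D_def by auto
  then obtain s where "strict_mono s"
    and conv: "\<forall>k. convergent (\<lambda>n. blinfun_apply (from_nat_into Fs k) (u (s n)))"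
    using subseq_functionals_convergent[where e = "from_nat_into Fs" and u = u, OF u] by blast
  have "Fs \<subseteq> {h. convergent (\<lambda>n. blinfun_apply h (u (s n)))}"
  proof
    fix h assume "h \<in> Fs"
    then obtain k where "from_nat_into Fs k = h"
      using from_nat_into_surj[OF \<open>countable Fs\<close>] by blast
    then show "h \<in> {h. convergent (\<lambda>n. blinfun_apply h (u (s n)))}" using conv by auto
  qed
  then have span_conv: "span Fs \<subseteq> {h. convergent (\<lambda>n. blinfun_apply h (u (s n)))}"
    by (rule span_minimal) (rule subspace_convergent_functionals)
  have dense: "\<exists>h\<in>span Fs. dual_seminorm u (g - h) < \<epsilon>" if "0 < \<epsilon>" for g \<epsilon>
  proof (rule reflexive_norming_span_dense[where u = u and Y = "closure D" and D = D, OF refl u])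
    show "subspace (closure D)" unfolding D_def by (rule subspace_closure_rat_combinations)
    show "\<exists>f\<in>Fs. norm f \<le> 1 \<and> blinfun_apply f d = norm d" if "d \<in> D" for d
      using that nf unfolding Fs_def by blast
  qed (use uD that in auto)
  have "convergent (\<lambda>n. blinfun_apply g (u (s n)))" for g :: "'a \<Rightarrow>\<^sub>L real"
    by (rule convergent_functional_if_approximable[where H = "span Fs" and u = u, OF u])
      (use span_conv dense in auto)
  then have "\<exists>w. weakly_conv (\<lambda>n. u (s n)) w"
    by (rule weakly_conv_if_functionals_convergent[where v = "\<lambda>n. u (s n)", OF refl u])
  then show ?thesis using \<open>strict_mono s\<close> by blast
qed

section \<open>Subsequences and operator-weak convergence\<close>

lemma refining_subseqs:
  fixes \<sigma> :: "nat \<Rightarrow> nat \<Rightarrow> nat"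
  assumes mono0: "strict_mono (\<sigma> 0)"
    and refine: "\<And>n. \<exists>t. strict_mono t \<and> \<sigma> (Suc n) = \<sigma> n \<circ> t"
  shows refining_subseqs_strict_mono: "strict_mono (\<sigma> n)"
    and refining_subseqs_range: "m \<le> n \<Longrightarrow> range (\<sigma> n) \<subseteq> range (\<sigma> m)"
proof -
  show "strict_mono (\<sigma> n)"
  proof (induct n)
    case (Suc n)
    obtain t where "strict_mono t" "\<sigma> (Suc n) = \<sigma> n \<circ> t" using refine by blast
    with Suc show ?case using strict_mono_o[of "\<sigma> n" t] by (simp add: o_def)
  qed (rule mono0)
  show "range (\<sigma> n) \<subseteq> range (\<sigma> m)" if "m \<le> n"
    using that
  proof (induct n rule: dec_induct)
    case (step n)
    obtain t where "\<sigma> (Suc n) = \<sigma> n \<circ> t" using refine by blast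
    with step show ?case by auto
  qed simp
qed

lemma diagonal_subseq:
  fixes \<sigma> :: "nat \<Rightarrow> nat \<Rightarrow> nat"
  assumes mono0: "strict_mono (\<sigma> 0)"
    and refine: "\<And>n. \<exists>t. strict_mono t \<and> \<sigma> (Suc n) = \<sigma> n \<circ> t"
  shows diagonal_subseq_strict_mono: "strict_mono (\<lambda>n. \<sigma> n n)"
    and diagonal_subseq_factor: "\<exists>\<tau>. strict_mono \<tau> \<and> (\<forall>n\<ge>m. \<sigma> n n = \<sigma> m (\<tau> n))"
proof -
  note mono = refining_subseqs_strict_mono[OF mono0 refine]
  have "\<sigma> n n < \<sigma> (Suc n) (Suc n)" for n
  proof -
    obtain t where "strict_mono t" "\<sigma> (Suc n) = \<sigma> n \<circ> t" using refine by blast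
    then have "\<sigma> n (Suc n) \<le> \<sigma> (Suc n) (Suc n)"
      using seq_suble strict_mono_less_eq[OF mono] by simp
    moreover have "\<sigma> n n < \<sigma> n (Suc n)" using strict_monoD[OF mono[of n], of n "Suc n"] by simp
    ultimately show ?thesis by linarith
  qed
  then show diag: "strict_mono (\<lambda>n. \<sigma> n n)" by (simp add: strict_mono_Suc_iff)
  note range = refining_subseqs_range[OF mono0 refine]
  define j where "j n = inv (\<sigma> m) (\<sigma> n n)" for n
  have j: "\<sigma> m (j n) = \<sigma> n n" if "m \<le> n" for n
    unfolding j_def using range[OF that] by (intro f_inv_into_f) blast
  define \<tau> where "\<tau> n = (if n < m then n else j n)" for n
  have "\<tau> n < \<tau> (Suc n)" for n
  proof (cases "m \<le> n")
    case True
    then have "\<sigma> m (\<tau> n) < \<sigma> m (\<tau> (Suc n))"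
      using j strict_monoD[OF diag, of n "Suc n"] by (simp add: \<tau>_def)
    then show ?thesis using strict_mono_less[OF mono[of m]] by blast
  next
    case False
    moreover have "j m = m" using j[of m] strict_mono_eq[OF mono[of m]] by simp
    ultimately show ?thesis by (cases "Suc n = m") (auto simp: \<tau>_def)
  qed
  then have "strict_mono \<tau>" by (simp add: strict_mono_Suc_iff)
  then show "\<exists>\<tau>. strict_mono \<tau> \<and> (\<forall>n\<ge>m. \<sigma> n n = \<sigma> m (\<tau> n))"
    using j by (auto simp: \<tau>_def)
qed

lemma op_weak_conv_iff: "op_weak_conv h A \<longleftrightarrow> (\<forall>x. weakly_conv (\<lambda>n. blinfun_apply (h n) x) (blinfun_apply A x))"
  unfolding op_weak_conv_def ..

lemma op_weak_conv_subseq: "op_weak_conv h A \<Longrightarrow> strict_mono s \<Longrightarrow> op_weak_conv (\<lambda>n. h (s n)) A"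
  unfolding op_weak_conv_def using weakly_conv_subseq by blast

text \<open>Unlike \<open>\<not> op_weak_conv h 0\<close>, this is inherited by all subsequences.\<close>
definition op_weak_bounded_away :: "(nat \<Rightarrow> 'a::real_normed_vector \<Rightarrow>\<^sub>L 'a) \<Rightarrow> bool" where
  "op_weak_bounded_away h \<longleftrightarrow>
     (\<exists>x (f::'a \<Rightarrow>\<^sub>L real) \<epsilon>. 0 < \<epsilon> \<and> (\<forall>n. \<epsilon> \<le> \<bar>blinfun_apply f (blinfun_apply (h n) x)\<bar>))"

lemma op_weak_bounded_away_not_null: "op_weak_bounded_away h \<Longrightarrow> \<not> op_weak_conv h 0"
proof
  assume "op_weak_bounded_away h" "op_weak_conv h 0"
  then obtain x and f :: "'a \<Rightarrow>\<^sub>L real" and \<epsilon> where "0 < \<epsilon>"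
    and away: "\<And>n. \<epsilon> \<le> \<bar>blinfun_apply f (blinfun_apply (h n) x)\<bar>"
    unfolding op_weak_bounded_away_def by blast
  have "weakly_conv (\<lambda>n. blinfun_apply (h n) x) 0"
    using \<open>op_weak_conv h 0\<close> unfolding op_weak_conv_iff by simp
  then have "(\<lambda>n. blinfun_apply f (blinfun_apply (h n) x)) \<longlonglongrightarrow> 0"
    unfolding weakly_conv_def by (metis blinfun.zero_right)
  then obtain N where "\<forall>n\<ge>N. norm (blinfun_apply f (blinfun_apply (h n) x) - 0) < \<epsilon>"
    using \<open>0 < \<epsilon>\<close> unfolding LIMSEQ_iff by blast
  then have "\<bar>blinfun_apply f (blinfun_apply (h N) x)\<bar> < \<epsilon>" by simp
  then show False using away[of N] by simp
qed

lemma not_op_weak_null_imp_bounded_away_subseq: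
  assumes "\<not> op_weak_conv h 0"
  shows "\<exists>s. strict_mono s \<and> op_weak_bounded_away (\<lambda>n. h (s n))"
proof -
  obtain x where "\<not> weakly_conv (\<lambda>n. blinfun_apply (h n) x) 0"
    using assms unfolding op_weak_conv_iff by auto
  then obtain f :: "'a \<Rightarrow>\<^sub>L real"
    where "\<not> (\<lambda>n. blinfun_apply f (blinfun_apply (h n) x)) \<longlonglongrightarrow> 0"
    unfolding weakly_conv_def by auto
  then obtain \<epsilon> where "0 < \<epsilon>"
    and not_ev: "\<not> eventually (\<lambda>n. \<bar>blinfun_apply f (blinfun_apply (h n) x)\<bar> < \<epsilon>) sequentially"
    unfolding tendsto_iff by (auto simp: dist_real_def)
  from not_eventually_sequentiallyD[OF not_ev] obtain s :: "nat \<Rightarrow> nat"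
    where "strict_mono s" "\<forall>n. \<not> \<bar>blinfun_apply f (blinfun_apply (h (s n)) x)\<bar> < \<epsilon>"
    by auto
  then have "strict_mono s" "\<forall>n. \<epsilon> \<le> \<bar>blinfun_apply f (blinfun_apply (h (s n)) x)\<bar>"
    by (simp_all add: not_less)
  then show ?thesis unfolding op_weak_bounded_away_def using \<open>0 < \<epsilon>\<close>
    by (intro exI[of _ s]) (auto intro!: exI[of _ x] exI[of _ f] exI[of _ \<epsilon>])
qed

section \<open>Dislocation spaces\<close>

locale dislocation_space =
  fixes G :: "('a::banach \<Rightarrow>\<^sub>L 'a) set"
  assumes dislocation_group: "dislocation_group G"
begin

lemma norm_dislocation: "g \<in> G \<Longrightarrow> norm (blinfun_apply g x) = norm x"
  using dislocation_group unfolding dislocation_group_def by blast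

lemma id_in_dislocations: "id_blinfun \<in> G"
  using dislocation_group unfolding dislocation_group_def by blast

lemma compose_in_dislocations: "g \<in> G \<Longrightarrow> h \<in> G \<Longrightarrow> g o\<^sub>L h \<in> G"
  using dislocation_group unfolding dislocation_group_def by blast

lemma strongly_convergent_subseq:
  assumes "\<And>n. gs n \<in> G" "\<not> op_weak_conv gs 0"
  shows "\<exists>r A. strict_mono r \<and> (\<forall>x. (\<lambda>n. blinfun_apply (gs (r n)) x) \<longlonglongrightarrow> blinfun_apply A x)"
proof -
  have "\<exists>r A. strict_mono r \<and> op_strong_conv (gs \<circ> r) A"
    using assms dislocation_group unfolding dislocation_group_def by blast
  then show ?thesis unfolding op_strong_conv_def by auto
qed

lemma weakly_null_subseq_dislocated:
  assumes "\<And>n. gs n \<in> G" "\<not> op_weak_conv gs 0" "weakly_conv us 0"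
  shows "\<exists>r. strict_mono r \<and> weakly_conv (\<lambda>j. blinfun_apply (gs (r j)) (us (r j))) 0"
  using assms dislocation_group unfolding dislocation_group_def by blast

definition ginv :: "('a \<Rightarrow>\<^sub>L 'a) \<Rightarrow> 'a \<Rightarrow>\<^sub>L 'a" where
  "ginv g = (SOME h. h \<in> G \<and> g o\<^sub>L h = id_blinfun \<and> h o\<^sub>L g = id_blinfun)"

lemma ginv:
  assumes "g \<in> G"
  shows ginv_in_dislocations: "ginv g \<in> G"
    and ginv_apply_left: "blinfun_apply (ginv g) (blinfun_apply g x) = x"
    and ginv_apply_right: "blinfun_apply g (blinfun_apply (ginv g) x) = x"
proof -
  have "\<exists>h. h \<in> G \<and> g o\<^sub>L h = id_blinfun \<and> h o\<^sub>L g = id_blinfun"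
    using assms dislocation_group unfolding dislocation_group_def by blast
  then have "ginv g \<in> G \<and> g o\<^sub>L ginv g = id_blinfun \<and> ginv g o\<^sub>L g = id_blinfun"
    unfolding ginv_def by (rule someI_ex)
  then show "ginv g \<in> G" "blinfun_apply (ginv g) (blinfun_apply g x) = x"
    "blinfun_apply g (blinfun_apply (ginv g) x) = x"
    by (metis blinfun_apply_blinfun_compose blinfun_apply_id_blinfun)+
qed

lemma inv_dislocation: "g \<in> G \<Longrightarrow> inv (blinfun_apply g) = blinfun_apply (ginv g)"
  by (rule inv_unique_comp) (auto simp: fun_eq_iff ginv_apply_left ginv_apply_right)

lemma norm_ginv: "g \<in> G \<Longrightarrow> norm (blinfun_apply (ginv g) x) = norm x"
  using norm_dislocation ginv_in_dislocations by blast

lemma ginv_eqI: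
  assumes "g \<in> G" "\<And>x. blinfun_apply h (blinfun_apply g x) = x"
  shows "ginv g = h"
proof (rule blinfun_eqI)
  fix x
  have "blinfun_apply h x = blinfun_apply h (blinfun_apply g (blinfun_apply (ginv g) x))"
    using ginv_apply_right[OF assms(1)] by simp
  then show "blinfun_apply (ginv g) x = blinfun_apply h x" using assms(2) by simp
qed

lemma ginv_compose: "g \<in> G \<Longrightarrow> h \<in> G \<Longrightarrow> ginv (ginv g o\<^sub>L h) = ginv h o\<^sub>L g"
  by (rule ginv_eqI)
    (auto simp: compose_in_dislocations ginv_in_dislocations ginv_apply_left ginv_apply_right)

text \<open>A subsequence of \<open>k n\<close> converges strongly to some \<open>A\<close>; if the inverses were operator-weakly
  null, then \<open>ginv (k n) (A x) \<rightarrow> x\<close> strongly (the \<open>k n\<close> are isometries) and weakly to \<open>0\<close>.\<close>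
lemma ginv_bounded_away_subseq:
  assumes kG: "\<And>n. k n \<in> G" and away: "op_weak_bounded_away k"
  shows "\<exists>s. strict_mono s \<and> op_weak_bounded_away (\<lambda>n. ginv (k (s n)))"
proof -
  obtain s1 A where "strict_mono s1"
    and lim: "\<And>y. (\<lambda>n. blinfun_apply (k (s1 n)) y) \<longlonglongrightarrow> blinfun_apply A y"
    using strongly_convergent_subseq[OF kG op_weak_bounded_away_not_null[OF away]] by blast
  obtain x and f :: "'a \<Rightarrow>\<^sub>L real" and \<epsilon> where "0 < \<epsilon>"
    and f: "\<And>n. \<epsilon> \<le> \<bar>blinfun_apply f (blinfun_apply (k n) x)\<bar>"
    using away unfolding op_weak_bounded_away_def by blast
  have "\<not> op_weak_conv (\<lambda>n. ginv (k (s1 n))) 0"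
  proof
    assume null: "op_weak_conv (\<lambda>n. ginv (k (s1 n))) 0"
    have "(\<lambda>n. blinfun_apply A x - blinfun_apply (k (s1 n)) x) \<longlonglongrightarrow> 0"
      using tendsto_diff[OF tendsto_const lim[of x], of "blinfun_apply A x"] by simp
    then have "(\<lambda>n. norm (blinfun_apply A x - blinfun_apply (k (s1 n)) x)) \<longlonglongrightarrow> 0"
      by (rule tendsto_norm_zero)
    moreover have "norm (blinfun_apply (ginv (k (s1 n))) (blinfun_apply A x) - x)
        = norm (blinfun_apply A x - blinfun_apply (k (s1 n)) x)" for n
      using norm_ginv[OF kG] ginv_apply_left[OF kG]
      by (metis blinfun.diff_right)
    ultimately have "(\<lambda>n. norm (blinfun_apply (ginv (k (s1 n))) (blinfun_apply A x) - x)) \<longlonglongrightarrow> 0"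
      by simp
    then have "(\<lambda>n. blinfun_apply (ginv (k (s1 n))) (blinfun_apply A x)) \<longlonglongrightarrow> x"
      by (simp add: tendsto_norm_zero_iff LIM_zero_iff)
    then have "weakly_conv (\<lambda>n. blinfun_apply (ginv (k (s1 n))) (blinfun_apply A x)) x"
      by (rule tendsto_imp_weakly_conv)
    moreover have "weakly_conv (\<lambda>n. blinfun_apply (ginv (k (s1 n))) (blinfun_apply A x)) 0"
      using null unfolding op_weak_conv_iff by simp
    ultimately have "x = 0" by (rule weakly_conv_unique)
    then show False using f[of 0] \<open>0 < \<epsilon>\<close> by simp
  qed
  then obtain s2 where "strict_mono s2" "op_weak_bounded_away (\<lambda>n. ginv (k (s1 (s2 n))))"
    using not_op_weak_null_imp_bounded_away_subseq by blast
  then show ?thesis using strict_mono_o[OF \<open>strict_mono s1\<close> \<open>strict_mono s2\<close>] by (auto simp: o_def)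
qed

lemma dislocations_orthogonal_one_sided:
  assumes gG: "\<And>n. g n \<in> G" and hG: "\<And>n. h n \<in> G"
    and null: "weakly_conv (\<lambda>n. blinfun_apply (ginv (g n)) (r n)) 0"
    and w: "weakly_conv (\<lambda>n. blinfun_apply (ginv (h n)) (r n)) w" "w \<noteq> 0"
    and t: "strict_mono t" and away: "op_weak_bounded_away (\<lambda>n. ginv (h (t n)) o\<^sub>L g (t n))"
  shows False
proof -
  have "ginv (h (t n)) o\<^sub>L g (t n) \<in> G" for n
    using compose_in_dislocations ginv_in_dislocations gG hG by blast
  from weakly_null_subseq_dislocated[OF this op_weak_bounded_away_not_null[OF away]
      weakly_conv_subseq[OF null t]]
  obtain s where "strict_mono s" and "weakly_conv (\<lambda>n. blinfun_apply (ginv (h (t (s n))) o\<^sub>L g (t (s n)))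
      (blinfun_apply (ginv (g (t (s n)))) (r (t (s n))))) 0"
    by blast
  then have "weakly_conv (\<lambda>n. blinfun_apply (ginv (h (t (s n)))) (r (t (s n)))) 0"
    by (simp add: ginv_apply_right[OF gG])
  moreover have "weakly_conv (\<lambda>n. blinfun_apply (ginv (h (t (s n)))) (r (t (s n)))) w"
    using weakly_conv_subseq[OF w(1) strict_mono_o[OF t \<open>strict_mono s\<close>]] by simp
  ultimately have "0 = w" by (rule weakly_conv_unique)
  then show False using w(2) by simp
qed

lemma dislocations_orthogonal:
  assumes gG: "\<And>n. g n \<in> G" and hG: "\<And>n. h n \<in> G"
    and null: "weakly_conv (\<lambda>n. blinfun_apply (ginv (g n)) (r n)) 0"
    and w: "weakly_conv (\<lambda>n. blinfun_apply (ginv (h n)) (r n)) w" "w \<noteq> 0"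
  shows "op_weak_conv (\<lambda>n. ginv (h n) o\<^sub>L g n) 0" "op_weak_conv (\<lambda>n. ginv (g n) o\<^sub>L h n) 0"
proof -
  show "op_weak_conv (\<lambda>n. ginv (h n) o\<^sub>L g n) 0"
  proof (rule ccontr)
    assume "\<not> op_weak_conv (\<lambda>n. ginv (h n) o\<^sub>L g n) 0"
    then obtain t where "strict_mono t" "op_weak_bounded_away (\<lambda>n. ginv (h (t n)) o\<^sub>L g (t n))"
      using not_op_weak_null_imp_bounded_away_subseq by blast
    then show False using dislocations_orthogonal_one_sided[OF gG hG null w] by blast
  qed
  show "op_weak_conv (\<lambda>n. ginv (g n) o\<^sub>L h n) 0"
  proof (rule ccontr)
    assume "\<not> op_weak_conv (\<lambda>n. ginv (g n) o\<^sub>L h n) 0"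
    then obtain t1 where "strict_mono t1" and away: "op_weak_bounded_away (\<lambda>n. ginv (g (t1 n)) o\<^sub>L h (t1 n))"
      using not_op_weak_null_imp_bounded_away_subseq by blast
    have "ginv (g (t1 n)) o\<^sub>L h (t1 n) \<in> G" for n
      using compose_in_dislocations ginv_in_dislocations gG hG by blast
    from ginv_bounded_away_subseq[OF this away] obtain t2 where "strict_mono t2"
      and "op_weak_bounded_away (\<lambda>n. ginv (ginv (g (t1 (t2 n))) o\<^sub>L h (t1 (t2 n))))"
      by blast
    then have "op_weak_bounded_away (\<lambda>n. ginv (h ((t1 \<circ> t2) n)) o\<^sub>L g ((t1 \<circ> t2) n))"
      by (simp add: ginv_compose gG hG)
    then show False
      using dislocations_orthogonal_one_sided[OF gG hG null w strict_mono_o[OF \<open>strict_mono t1\<close> \<open>strict_mono t2\<close>]]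
      by blast
  qed
qed

lemma reindex_along_subseq:
  fixes \<sigma> :: "nat \<Rightarrow> nat"
  assumes "strict_mono \<sigma>" "\<And>n. h n \<in> G"
  obtains h' where "\<And>m. h' m \<in> G" "\<And>n. h' (\<sigma> n) = h n"
proof
  define h' where "h' m = (if m \<in> range \<sigma> then h (inv \<sigma> m) else id_blinfun)" for m
  show "h' m \<in> G" for m unfolding h'_def using assms(2) id_in_dislocations by auto
  show "h' (\<sigma> n) = h n" for n
    unfolding h'_def using strict_mono_imp_inj_on[OF assms(1)] by (simp add: inv_f_f)
qed

end

section \<open>Extraction of profiles\<close>

locale profile_decomposition = dislocation_space G for G :: "('a::banach \<Rightarrow>\<^sub>L 'a) set" +
  fixes u :: "nat \<Rightarrow> 'a"
  assumes reflexive: "reflexive_space TYPE('a)" and bounded_u: "bounded (range u)"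
begin

definition residual :: "nat \<Rightarrow> (nat \<Rightarrow> nat \<Rightarrow> 'a \<Rightarrow>\<^sub>L 'a) \<Rightarrow> (nat \<Rightarrow> 'a) \<Rightarrow> nat \<Rightarrow> 'a" where
  "residual L g w m = u m - (\<Sum>k\<le>L. blinfun_apply (g k m) (w k))"

text \<open>The dislocations \<open>g l m\<close> are indexed by the position \<open>m\<close> in the original
  sequence, so they need not be reindexed when \<open>\<sigma>\<close> is refined.\<close>
definition partial_decomposition ::
    "nat \<Rightarrow> (nat \<Rightarrow> nat) \<Rightarrow> (nat \<Rightarrow> nat \<Rightarrow> 'a \<Rightarrow>\<^sub>L 'a) \<Rightarrow> (nat \<Rightarrow> 'a) \<Rightarrow> bool" where
  "partial_decomposition L \<sigma> g w \<longleftrightarrow> strict_mono \<sigma> \<and> (\<forall>l m. g l m \<in> G) \<and> (\<forall>m. g 0 m = id_blinfun) \<and>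
     (\<forall>l. 1 \<le> l \<and> l \<le> L \<longrightarrow> w l \<noteq> 0) \<and>
     (\<forall>l\<le>L. weakly_conv (\<lambda>n. blinfun_apply (ginv (g l (\<sigma> n))) (u (\<sigma> n))) (w l)) \<and>
     (\<forall>l m. l \<le> L \<and> m \<le> L \<and> l \<noteq> m \<longrightarrow> op_weak_conv (\<lambda>n. ginv (g l (\<sigma> n)) o\<^sub>L g m (\<sigma> n)) 0)"

definition profiles :: "nat \<Rightarrow> (nat \<Rightarrow> nat) \<Rightarrow> (nat \<Rightarrow> nat \<Rightarrow> 'a \<Rightarrow>\<^sub>L 'a) \<Rightarrow> (nat \<Rightarrow> 'a) \<Rightarrow> 'a set" where
  "profiles L \<sigma> g w = {v. \<exists>t h. strict_mono t \<and> (\<forall>n. h n \<in> G) \<and>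
      weakly_conv (\<lambda>n. blinfun_apply (ginv (h n)) (residual L g w (\<sigma> (t n)))) v}"

lemma partial_decompositionD:
  assumes "partial_decomposition L \<sigma> g w"
  shows partial_decomposition_strict_mono: "strict_mono \<sigma>"
    and partial_decomposition_in_dislocations: "g l m \<in> G"
    and partial_decomposition_id: "g 0 m = id_blinfun"
    and partial_decomposition_nonzero: "1 \<le> l \<Longrightarrow> l \<le> L \<Longrightarrow> w l \<noteq> 0"
    and partial_decomposition_weak_limit:
      "l \<le> L \<Longrightarrow> weakly_conv (\<lambda>n. blinfun_apply (ginv (g l (\<sigma> n))) (u (\<sigma> n))) (w l)"
    and partial_decomposition_orthogonal:
      "l \<le> L \<Longrightarrow> m \<le> L \<Longrightarrow> l \<noteq> m \<Longrightarrow> op_weak_conv (\<lambda>n. ginv (g l (\<sigma> n)) o\<^sub>L g m (\<sigma> n)) 0"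
  using assms unfolding partial_decomposition_def by auto

lemma partial_decompositionI:
  assumes "strict_mono \<sigma>" "\<And>l m. g l m \<in> G" "\<And>m. g 0 m = id_blinfun"
    "\<And>l. 1 \<le> l \<Longrightarrow> l \<le> L \<Longrightarrow> w l \<noteq> 0"
    "\<And>l. l \<le> L \<Longrightarrow> weakly_conv (\<lambda>n. blinfun_apply (ginv (g l (\<sigma> n))) (u (\<sigma> n))) (w l)"
    "\<And>l m. l \<le> L \<Longrightarrow> m \<le> L \<Longrightarrow> l \<noteq> m \<Longrightarrow>
      op_weak_conv (\<lambda>n. ginv (g l (\<sigma> n)) o\<^sub>L g m (\<sigma> n)) 0"
  shows "partial_decomposition L \<sigma> g w"
  using assms unfolding partial_decomposition_def by auto

lemma residual_cong:
  "(\<And>l. l \<le> L \<Longrightarrow> g' l = g l) \<Longrightarrow> (\<And>l. l \<le> L \<Longrightarrow> w' l = w l) \<Longrightarrow>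
    residual L g' w' = residual L g w"
  unfolding residual_def by (intro ext) simp

lemma profiles_cong:
  assumes "\<And>l. l \<le> L \<Longrightarrow> g' l = g l" "\<And>l. l \<le> L \<Longrightarrow> w' l = w l"
  shows "profiles L \<sigma> g' w' = profiles L \<sigma> g w"
  using residual_cong[OF assms] by (simp add: profiles_def)

lemma partial_decomposition_cong:
  assumes "partial_decomposition L \<sigma> g w" "\<And>l m. g' l m \<in> G" "\<And>m. g' 0 m = id_blinfun"
    "\<And>l. l \<le> L \<Longrightarrow> g' l = g l" "\<And>l. l \<le> L \<Longrightarrow> w' l = w l"
  shows "partial_decomposition L \<sigma> g' w'"
  using assms unfolding partial_decomposition_def by simp

lemma partial_decomposition_subseq:
  assumes P: "partial_decomposition L \<sigma> g w" and t: "strict_mono t"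
  shows "partial_decomposition L (\<sigma> \<circ> t) g w"
proof (rule partial_decompositionI)
  show "strict_mono (\<sigma> \<circ> t)" using strict_mono_o[OF partial_decomposition_strict_mono[OF P] t] .
  show "weakly_conv (\<lambda>n. blinfun_apply (ginv (g l ((\<sigma> \<circ> t) n))) (u ((\<sigma> \<circ> t) n))) (w l)"
    if "l \<le> L" for l
    using weakly_conv_subseq[OF partial_decomposition_weak_limit[OF P that] t] by simp
  show "op_weak_conv (\<lambda>n. ginv (g l ((\<sigma> \<circ> t) n)) o\<^sub>L g m ((\<sigma> \<circ> t) n)) 0"
    if "l \<le> L" "m \<le> L" "l \<noteq> m" for l m
    using op_weak_conv_subseq[OF partial_decomposition_orthogonal[OF P that] t] by simp
qed (use partial_decomposition_in_dislocations[OF P] partial_decomposition_id[OF P]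
    partial_decomposition_nonzero[OF P] in auto)

lemma residual_weakly_null:
  assumes P: "partial_decomposition L' \<sigma> g w" and "L \<le> L'" "k \<le> L"
  shows "weakly_conv (\<lambda>n. blinfun_apply (ginv (g k (\<sigma> n))) (residual L g w (\<sigma> n))) 0"
proof -
  note gG = partial_decomposition_in_dislocations[OF P]
  have "weakly_conv (\<lambda>n. blinfun_apply (ginv (g k (\<sigma> n))) (blinfun_apply (g j (\<sigma> n)) (w j)))
      (if j = k then w k else 0)" if "j \<le> L" for j
  proof (cases "j = k")
    case True
    then show ?thesis by (simp add: ginv_apply_left[OF gG] weakly_conv_const)
  next
    case False
    then have "op_weak_conv (\<lambda>n. ginv (g k (\<sigma> n)) o\<^sub>L g j (\<sigma> n)) 0"
      using partial_decomposition_orthogonal[OF P] \<open>L \<le> L'\<close> \<open>k \<le> L\<close> that by simp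
    with False show ?thesis unfolding op_weak_conv_iff by simp
  qed
  then have "weakly_conv (\<lambda>n. \<Sum>j\<le>L. blinfun_apply (ginv (g k (\<sigma> n))) (blinfun_apply (g j (\<sigma> n)) (w j)))
      (\<Sum>j\<le>L. if j = k then w k else 0)"
    by (intro weakly_conv_sum) auto
  moreover have "(\<Sum>j\<le>L. if j = k then w k else 0) = w k" using \<open>k \<le> L\<close> by simp
  moreover have "weakly_conv (\<lambda>n. blinfun_apply (ginv (g k (\<sigma> n))) (u (\<sigma> n))) (w k)"
    using partial_decomposition_weak_limit[OF P] \<open>L \<le> L'\<close> \<open>k \<le> L\<close> by simp
  ultimately have "weakly_conv (\<lambda>n. blinfun_apply (ginv (g k (\<sigma> n))) (u (\<sigma> n)) -
      (\<Sum>j\<le>L. blinfun_apply (ginv (g k (\<sigma> n))) (blinfun_apply (g j (\<sigma> n)) (w j)))) (w k - w k)"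
    using weakly_conv_diff by fastforce
  then show ?thesis by (simp add: residual_def blinfun.diff_right blinfun.sum_right)
qed

lemma partial_decomposition_extend:
  assumes P: "partial_decomposition L \<sigma> g w" and v: "v \<in> profiles L \<sigma> g w" "v \<noteq> 0"
  shows "\<exists>t h. strict_mono t \<and>
    partial_decomposition (Suc L) (\<sigma> \<circ> t) (g(Suc L := h)) (w(Suc L := v))"
proof -
  obtain t hs where t: "strict_mono t" and hsG: "\<And>n. hs n \<in> G"
    and lim: "weakly_conv (\<lambda>n. blinfun_apply (ginv (hs n)) (residual L g w (\<sigma> (t n)))) v"
    using v(1) unfolding profiles_def by blast
  define \<sigma>' where "\<sigma>' = \<sigma> \<circ> t"
  have P': "partial_decomposition L \<sigma>' g w"
    unfolding \<sigma>'_def using partial_decomposition_subseq[OF P t] .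
  note gG = partial_decomposition_in_dislocations[OF P']
  have "strict_mono \<sigma>'" using partial_decomposition_strict_mono[OF P'] .
  obtain h where hG: "\<And>m. h m \<in> G" and h\<sigma>: "\<And>n. h (\<sigma>' n) = hs n"
    using reindex_along_subseq[where h = hs, OF \<open>strict_mono \<sigma>'\<close> hsG] by blast
  have lim': "weakly_conv (\<lambda>n. blinfun_apply (ginv (h (\<sigma>' n))) (residual L g w (\<sigma>' n))) v"
    unfolding h\<sigma> using lim by (simp add: \<sigma>'_def)
  have orth: "op_weak_conv (\<lambda>n. ginv (h (\<sigma>' n)) o\<^sub>L g k (\<sigma>' n)) 0"
      "op_weak_conv (\<lambda>n. ginv (g k (\<sigma>' n)) o\<^sub>L h (\<sigma>' n)) 0" if "k \<le> L" for k
    using dislocations_orthogonal[where g = "\<lambda>n. g k (\<sigma>' n)" and h = "\<lambda>n. h (\<sigma>' n)",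
        OF gG hG residual_weakly_null[OF P' order_refl that] lim' v(2)]
    by auto
  have "weakly_conv (\<lambda>n. \<Sum>k\<le>L. blinfun_apply (ginv (h (\<sigma>' n))) (blinfun_apply (g k (\<sigma>' n)) (w k)))
      (\<Sum>k\<le>L. 0)"
    using orth(1) by (intro weakly_conv_sum) (auto simp: op_weak_conv_iff)
  from weakly_conv_add[OF lim' this]
  have new: "weakly_conv (\<lambda>n. blinfun_apply (ginv (h (\<sigma>' n))) (u (\<sigma>' n))) v"
    by (simp add: residual_def blinfun.diff_right blinfun.sum_right)
  have "partial_decomposition (Suc L) \<sigma>' (g(Suc L := h)) (w(Suc L := v))"
  proof (rule partial_decompositionI)
    show "strict_mono \<sigma>'" by fact
    show "(g(Suc L := h)) l m \<in> G" for l m using gG hG by simp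
    show "(g(Suc L := h)) 0 m = id_blinfun" for m using partial_decomposition_id[OF P'] by simp
    show "(w(Suc L := v)) l \<noteq> 0" if "1 \<le> l" "l \<le> Suc L" for l
      using that v(2) partial_decomposition_nonzero[OF P'] by (cases "l = Suc L") auto
    show "weakly_conv (\<lambda>n. blinfun_apply (ginv ((g(Suc L := h)) l (\<sigma>' n))) (u (\<sigma>' n)))
        ((w(Suc L := v)) l)" if "l \<le> Suc L" for l
      using that new partial_decomposition_weak_limit[OF P'] by (cases "l = Suc L") auto
    show "op_weak_conv (\<lambda>n. ginv ((g(Suc L := h)) l (\<sigma>' n)) o\<^sub>L (g(Suc L := h)) m (\<sigma>' n)) 0"
      if "l \<le> Suc L" "m \<le> Suc L" "l \<noteq> m" for l m
      using that orth partial_decomposition_orthogonal[OF P'] by (cases "l = Suc L"; cases "m = Suc L") auto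
  qed
  then show ?thesis using t unfolding \<sigma>'_def by blast
qed

lemma residual_bounded:
  assumes gG: "\<And>k m. g k m \<in> G"
  obtains C where "\<And>m. norm (residual L g w m) \<le> C"
proof -
  obtain B where B: "\<And>m. norm (u m) \<le> B" using bounded_u unfolding bounded_iff by blast
  have "norm (residual L g w m) \<le> B + (\<Sum>k\<le>L. norm (w k))" for m
  proof -
    have "norm (residual L g w m) \<le> norm (u m) + norm (\<Sum>k\<le>L. blinfun_apply (g k m) (w k))"
      unfolding residual_def by (rule norm_triangle_ineq4)
    also have "norm (\<Sum>k\<le>L. blinfun_apply (g k m) (w k)) \<le> (\<Sum>k\<le>L. norm (w k))"
      using norm_sum[of "\<lambda>k. blinfun_apply (g k m) (w k)" "{..L}"] by (simp add: norm_dislocation[OF gG])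
    finally show ?thesis using B[of m] by simp
  qed
  then show thesis using that by blast
qed

lemma profiles_bounded:
  assumes gG: "\<And>k m. g k m \<in> G"
  obtains C where "\<And>v. v \<in> profiles L \<sigma> g w \<Longrightarrow> norm v \<le> C"
proof -
  obtain C where C: "\<And>m. norm (residual L g w m) \<le> C" using residual_bounded[where g = g, OF gG] by blast
  have "norm v \<le> C" if v: "v \<in> profiles L \<sigma> g w" for v
  proof -
    obtain t :: "nat \<Rightarrow> nat" and h where hG: "\<And>n. h n \<in> G"
      and lim: "weakly_conv (\<lambda>n. blinfun_apply (ginv (h n)) (residual L g w (\<sigma> (t n)))) v"
      using v unfolding profiles_def by blast
    from lim show ?thesis by (rule weakly_conv_norm_le) (simp add: norm_ginv[OF hG] C)
  qed
  then show ?thesis using that by blast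
qed

lemma exists_large_profile:
  assumes gG: "\<And>k m. g k m \<in> G" and nontrivial: "\<not> profiles L \<sigma> g w \<subseteq> {0}"
  shows "\<exists>v\<in>profiles L \<sigma> g w. v \<noteq> 0 \<and> (\<forall>v'\<in>profiles L \<sigma> g w. norm v' \<le> 2 * norm v)"
proof -
  let ?P = "profiles L \<sigma> g w"
  obtain C where C: "\<And>v. v \<in> ?P \<Longrightarrow> norm v \<le> C" using profiles_bounded[where g = g, OF gG] by blast
  obtain v0 where v0: "v0 \<in> ?P" "v0 \<noteq> 0" using nontrivial by blast
  have bdd: "bdd_above (norm ` ?P)" using C by (intro bdd_aboveI[of _ C]) auto
  define T where "T = Sup (norm ` ?P)"
  have T: "norm v \<le> T" if "v \<in> ?P" for v unfolding T_def using bdd that by (intro cSup_upper) auto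
  have "0 < norm v0" using v0(2) by simp
  then have "0 < T" using T[OF v0(1)] by linarith
  then have "T / 2 < Sup (norm ` ?P)" unfolding T_def by simp
  moreover have "norm ` ?P \<noteq> {}" using v0 by blast
  ultimately obtain x where "x \<in> norm ` ?P" "T / 2 < x" by (rule less_cSupE)
  then obtain v where v: "v \<in> ?P" "T / 2 < norm v" by blast
  have "norm v' \<le> 2 * norm v" if "v' \<in> ?P" for v'
    using T[OF that] v(2) by linarith
  moreover have "v \<noteq> 0" using v(2) \<open>0 < T\<close> by auto
  ultimately show ?thesis using v(1) by blast
qed

lemma profiles_transfer:
  fixes M :: nat and s \<tau> :: "nat \<Rightarrow> nat"
  assumes \<tau>: "strict_mono \<tau>" and N: "\<And>n. M \<le> n \<Longrightarrow> N n = \<sigma> (\<tau> n)" and s: "strict_mono s"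
    and hG: "\<And>n. h n \<in> G"
    and lim: "weakly_conv (\<lambda>n. blinfun_apply (ginv (h n)) (residual L g w (N (s n)))) v"
  shows "v \<in> profiles L \<sigma> g w"
proof -
  have shift: "strict_mono (\<lambda>n::nat. n + M)" by (simp add: strict_mono_def)
  define t where "t n = \<tau> (s (n + M))" for n
  have "strict_mono t" unfolding t_def using \<tau> s shift by (simp add: strict_mono_def)
  moreover have "N (s (n + M)) = \<sigma> (t n)" for n
    using N seq_suble[OF s, of "n + M"] unfolding t_def by simp
  then have "weakly_conv (\<lambda>n. blinfun_apply (ginv (h (n + M))) (residual L g w (\<sigma> (t n)))) v"
    using weakly_conv_subseq[OF lim shift] by simp
  ultimately show ?thesis unfolding profiles_def using hG
    by (intro CollectI exI[of _ t] exI[of _ "\<lambda>n. h (n + M)"]) simp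
qed

text \<open>Here weak sequential compactness enters: the dislocated residuals have a weakly
  convergent subsequence, whose limit is a profile.\<close>
lemma large_pairing_imp_large_profile:
  fixes M :: nat and s \<tau> :: "nat \<Rightarrow> nat" and \<phi> :: "'a \<Rightarrow>\<^sub>L real"
  assumes gG: "\<And>k m. g k m \<in> G" and \<tau>: "strict_mono \<tau>" and N: "\<And>n. M \<le> n \<Longrightarrow> N n = \<sigma> (\<tau> n)"
    and s: "strict_mono s" and hG: "\<And>n. h n \<in> G" and \<phi>: "norm \<phi> \<le> 1"
    and large: "\<And>n. a \<le> \<bar>blinfun_apply \<phi> (blinfun_apply (ginv (h n)) (residual L g w (N (s n))))\<bar>"
  shows "\<exists>v\<in>profiles L \<sigma> g w. a \<le> norm v"
proof -
  define r where "r n = blinfun_apply (ginv (h n)) (residual L g w (N (s n)))" for n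
  obtain C where "\<And>m. norm (residual L g w m) \<le> C"
    using residual_bounded[where g = g, OF gG] by blast
  then have "bounded (range r)" unfolding bounded_iff r_def using norm_ginv[OF hG] by auto
  from weakly_convergent_subsequence[where u = r, OF reflexive this] obtain s2 :: "nat \<Rightarrow> nat" and v
    where s2: "strict_mono s2" and lim: "weakly_conv (\<lambda>n. r (s2 n)) v"
    by blast
  have "(\<lambda>n. \<bar>blinfun_apply \<phi> (r (s2 n))\<bar>) \<longlonglongrightarrow> \<bar>blinfun_apply \<phi> v\<bar>"
    using lim unfolding weakly_conv_def by (intro tendsto_rabs) blast
  then have "a \<le> \<bar>blinfun_apply \<phi> v\<bar>"
    using large unfolding r_def by (intro LIMSEQ_le_const) auto
  also have "\<dots> \<le> norm v"
    using abs_blinfun_apply_le[of \<phi> v] \<phi> by (simp add: mult_left_le_one_le order_trans)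
  finally have "a \<le> norm v" .
  moreover have "v \<in> profiles L \<sigma> g w"
    using lim hG unfolding r_def
    by (intro profiles_transfer[where h = "\<lambda>n. h (s2 n)" and s = "s \<circ> s2" and M = M
          and N = N and \<sigma> = \<sigma> and \<tau> = \<tau>, OF \<tau> N])
      (auto intro: strict_mono_o[OF s s2])
  ultimately show ?thesis by blast
qed

lemma limsup_dislocated_residual_le:
  fixes M :: nat and \<tau> :: "nat \<Rightarrow> nat" and \<phi> :: "'a \<Rightarrow>\<^sub>L real"
  assumes gG: "\<And>k m. g k m \<in> G" and \<tau>: "strict_mono \<tau>" and N: "\<And>n. M \<le> n \<Longrightarrow> N n = \<sigma> (\<tau> n)"
    and c: "\<And>v. v \<in> profiles L \<sigma> g w \<Longrightarrow> norm v \<le> c" and \<phi>: "norm \<phi> \<le> 1"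
  shows "limsup (\<lambda>n. SUP h\<in>G. ereal \<bar>blinfun_apply \<phi> (blinfun_apply (ginv h) (residual L g w (N n)))\<bar>)
    \<le> ereal c"
proof (rule ereal_le_epsilon2)
  fix e :: real assume "0 < e"
  let ?X = "\<lambda>n. SUP h\<in>G. ereal \<bar>blinfun_apply \<phi> (blinfun_apply (ginv h) (residual L g w (N n)))\<bar>"
  have "eventually (\<lambda>n. ?X n \<le> ereal (c + e)) sequentially"
  proof (rule ccontr)
    assume "\<not> ?thesis"
    then obtain s :: "nat \<Rightarrow> nat" where s: "strict_mono s" and "\<forall>n. \<not> ?X (s n) \<le> ereal (c + e)"
      using not_eventually_sequentiallyD by blast
    then have "\<forall>n. \<exists>h\<in>G. c + e < \<bar>blinfun_apply \<phi> (blinfun_apply (ginv h) (residual L g w (N (s n))))\<bar>"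
      by (simp add: not_le less_SUP_iff)
    then obtain h where hG: "\<And>n. h n \<in> G"
      and "\<And>n. c + e < \<bar>blinfun_apply \<phi> (blinfun_apply (ginv (h n)) (residual L g w (N (s n))))\<bar>"
      by metis
    then have "\<And>n. c + e \<le> \<bar>blinfun_apply \<phi> (blinfun_apply (ginv (h n)) (residual L g w (N (s n))))\<bar>"
      by (simp add: less_imp_le)
    from large_pairing_imp_large_profile[where h = h and g = g and N = N and \<sigma> = \<sigma> and \<tau> = \<tau>
        and M = M and L = L and w = w, OF gG \<tau> N s hG \<phi> this]
    obtain v where "v \<in> profiles L \<sigma> g w" "c + e \<le> norm v" by blast
    then show False using c \<open>0 < e\<close> by fastforce
  qed
  then have "limsup ?X \<le> ereal (c + e)" by (rule Limsup_bounded)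
  then show "limsup ?X \<le> ereal c + ereal e" by simp
qed

lemma initial_partial_decomposition: "\<exists>\<sigma> w. partial_decomposition 0 \<sigma> (\<lambda>l m. id_blinfun) w"
proof -
  obtain \<sigma> :: "nat \<Rightarrow> nat" and v where "strict_mono \<sigma>" "weakly_conv (\<lambda>n. u (\<sigma> n)) v"
    using weakly_convergent_subsequence[OF reflexive bounded_u] by blast
  moreover have "ginv id_blinfun = id_blinfun"
    by (rule ginv_eqI[OF id_in_dislocations]) simp
  ultimately have "partial_decomposition 0 \<sigma> (\<lambda>l m. id_blinfun) (\<lambda>l. v)"
    using id_in_dislocations by (intro partial_decompositionI) auto
  then show ?thesis by blast
qed

text \<open>Choosing the new profile of at least half the maximal norm is what makes the residuals
  vanish in the limit when the profiles tend to \<open>0\<close>.\<close>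
lemma extraction_step:
  assumes P: "partial_decomposition L \<sigma> g w" and "L \<le> n"
    and stopped: "L < n \<longrightarrow> profiles L \<sigma> g w \<subseteq> {0}"
  shows "\<exists>\<sigma>' g' w' L'. (partial_decomposition L' \<sigma>' g' w' \<and> L' \<le> Suc n \<and>
      (L' < Suc n \<longrightarrow> profiles L' \<sigma>' g' w' \<subseteq> {0})) \<and>
    (\<exists>t. strict_mono t \<and> \<sigma>' = \<sigma> \<circ> t) \<and> (\<forall>l\<le>n. g' l = g l \<and> w' l = w l) \<and>
    (profiles L \<sigma> g w \<subseteq> {0} \<longrightarrow> \<sigma>' = \<sigma> \<and> g' = g \<and> w' = w \<and> L' = L) \<and>
    (\<not> profiles L \<sigma> g w \<subseteq> {0} \<longrightarrow>
      L' = Suc L \<and> (\<forall>v\<in>profiles L \<sigma> g w. norm v \<le> 2 * norm (w' (Suc L))))"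
proof (cases "profiles L \<sigma> g w \<subseteq> {0}")
  case True
  have "\<exists>t. strict_mono t \<and> \<sigma> = \<sigma> \<circ> t" by (intro exI[of _ id]) (simp add: strict_mono_def)
  then show ?thesis using P \<open>L \<le> n\<close> True by (intro exI[of _ \<sigma>] exI[of _ g] exI[of _ w] exI[of _ L]) auto
next
  case False
  then have "L = n" using stopped \<open>L \<le> n\<close> by linarith
  obtain v where v: "v \<in> profiles L \<sigma> g w" "v \<noteq> 0" "\<forall>v'\<in>profiles L \<sigma> g w. norm v' \<le> 2 * norm v"
    using exists_large_profile[OF partial_decomposition_in_dislocations[OF P] False] by blast
  obtain t h where "strict_mono t"
    and "partial_decomposition (Suc L) (\<sigma> \<circ> t) (g(Suc L := h)) (w(Suc L := v))"
    using partial_decomposition_extend[OF P v(1,2)] by blast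
  then show ?thesis using False v(3) \<open>L = n\<close>
    by (intro exI[of _ "\<sigma> \<circ> t"] exI[of _ "g(Suc L := h)"] exI[of _ "w(Suc L := v)"] exI[of _ "Suc L"])
      auto
qed

end

lemma sup_limsup_abs_nonneg:
  fixes X :: "'b \<Rightarrow> nat \<Rightarrow> 'a::real_normed_vector"
  assumes "G \<noteq> {}"
  shows "0 \<le> (SUP \<phi>\<in>{\<phi>::'a \<Rightarrow>\<^sub>L real. norm \<phi> \<le> 1}. limsup (\<lambda>n. SUP h\<in>G. ereal \<bar>blinfun_apply \<phi> (X h n)\<bar>))"
proof -
  have "limsup (\<lambda>n. SUP h\<in>G. ereal \<bar>blinfun_apply 0 (X h n)\<bar>) = 0"
    using assms by (simp add: Limsup_const)
  moreover have "limsup (\<lambda>n. SUP h\<in>G. ereal \<bar>blinfun_apply 0 (X h n)\<bar>) \<le>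
      (SUP \<phi>\<in>{\<phi>::'a \<Rightarrow>\<^sub>L real. norm \<phi> \<le> 1}. limsup (\<lambda>n. SUP h\<in>G. ereal \<bar>blinfun_apply \<phi> (X h n)\<bar>))"
    by (rule SUP_upper) simp
  ultimately show ?thesis by simp
qed

text \<open>A run of the extraction: step \<open>n\<close> has extracted the profiles \<open>w n 0, \<dots>, w n (depth n)\<close>
  along the subsequence \<open>\<sigma> n\<close>.\<close>
locale extraction = profile_decomposition G u for G :: "('a::banach \<Rightarrow>\<^sub>L 'a) set" and u +
  fixes \<sigma> :: "nat \<Rightarrow> nat \<Rightarrow> nat" and g :: "nat \<Rightarrow> nat \<Rightarrow> nat \<Rightarrow> 'a \<Rightarrow>\<^sub>L 'a"
    and w :: "nat \<Rightarrow> nat \<Rightarrow> 'a" and depth :: "nat \<Rightarrow> nat"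
  assumes decomposition: "\<And>n. partial_decomposition (depth n) (\<sigma> n) (g n) (w n)"
    and depth_le: "\<And>n. depth n \<le> n"
    and refine: "\<And>n. \<exists>t. strict_mono t \<and> \<sigma> (Suc n) = \<sigma> n \<circ> t"
    and keep: "\<And>n l. l \<le> n \<Longrightarrow> g (Suc n) l = g n l \<and> w (Suc n) l = w n l"
    and stop: "\<And>n. profiles (depth n) (\<sigma> n) (g n) (w n) \<subseteq> {0} \<Longrightarrow>
      \<sigma> (Suc n) = \<sigma> n \<and> g (Suc n) = g n \<and> w (Suc n) = w n \<and> depth (Suc n) = depth n"
    and grow: "\<And>n. \<not> profiles (depth n) (\<sigma> n) (g n) (w n) \<subseteq> {0} \<Longrightarrow> depth (Suc n) = Suc (depth n) \<and>
      (\<forall>v\<in>profiles (depth n) (\<sigma> n) (g n) (w n). norm v \<le> 2 * norm (w (Suc n) (Suc (depth n))))"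
begin

definition profile :: "nat \<Rightarrow> 'a" where "profile l = w l l"

definition dislocation :: "nat \<Rightarrow> nat \<Rightarrow> 'a \<Rightarrow>\<^sub>L 'a" where "dislocation l = g l l"

definition \<Lambda> :: enat where "\<Lambda> = (SUP n. enat (depth n))"

definition N :: "nat \<Rightarrow> nat" where "N n = \<sigma> n n"

abbreviation stopped :: "nat \<Rightarrow> bool" where
  "stopped n \<equiv> profiles (depth n) (\<sigma> n) (g n) (w n) \<subseteq> {0}"

lemma chain_stable: "l \<le> m \<Longrightarrow> g m l = dislocation l \<and> w m l = profile l"
proof (induct m rule: dec_induct)
  case base
  then show ?case unfolding dislocation_def profile_def by simp
next
  case (step m)
  then show ?case using keep[of l m] by simp
qed

lemma dislocation_in_dislocations: "dislocation l m \<in> G"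
  using partial_decomposition_in_dislocations[OF decomposition[of l]] unfolding dislocation_def .

lemma dislocation_0: "dislocation 0 m = id_blinfun"
  using partial_decomposition_id[OF decomposition[of 0]] unfolding dislocation_def .

lemma limit_decomposition: "partial_decomposition (depth n) (\<sigma> n) dislocation profile"
proof (rule partial_decomposition_cong[where g' = dislocation and w' = profile,
      OF decomposition dislocation_in_dislocations dislocation_0])
  fix l assume "l \<le> depth n"
  then have "l \<le> n" using depth_le order_trans by blast
  then show "dislocation l = g n l" "profile l = w n l" using chain_stable by simp_all
qed

lemma limit_profiles: "profiles (depth n) (\<sigma> n) dislocation profile = profiles (depth n) (\<sigma> n) (g n) (w n)"
proof (rule profiles_cong)
  fix l assume "l \<le> depth n"
  then have "l \<le> n" using depth_le order_trans by blast
  then show "dislocation l = g n l" "profile l = w n l" using chain_stable by simp_all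
qed

lemma depth_mono:
  assumes "n \<le> m"
  shows "depth n \<le> depth m"
proof -
  have "depth k \<le> depth (Suc k)" for k
    using stop[of k] grow[of k] by (cases "stopped k") auto
  then show ?thesis using assms by (rule lift_Suc_mono_le)
qed

lemma stopped_forever:
  assumes "stopped n" "n \<le> m"
  shows "depth m = depth n \<and> stopped m"
  using assms(2)
proof (induct m rule: dec_induct)
  case (step k)
  then show ?case using stop[of k] by auto
qed (use assms(1) in simp)

lemma enat_depth_le_\<Lambda>: "enat (depth n) \<le> \<Lambda>"
  unfolding \<Lambda>_def by (rule SUP_upper) simp

lemma le_\<Lambda>_imp_le_depth:
  assumes "enat l \<le> \<Lambda>"
  obtains n where "l \<le> depth n"
proof -
  have "\<exists>n. l \<le> depth n"
  proof (rule ccontr)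
    assume "\<nexists>n. l \<le> depth n"
    then have lt: "depth n < l" for n by (simp add: not_le)
    have "enat (depth n) \<le> enat (l - 1)" for n
      using lt[of n] by simp
    then have "\<Lambda> \<le> enat (l - 1)" unfolding \<Lambda>_def by (intro SUP_least) simp
    then have "enat l \<le> enat (l - 1)" using assms by (rule order_trans[rotated])
    moreover have "l \<noteq> 0" using \<open>\<nexists>n. l \<le> depth n\<close> by auto
    ultimately show False by simp
  qed
  then show thesis using that by blast
qed

lemma \<Lambda>_eq_if_stopped: "stopped n \<Longrightarrow> \<Lambda> = enat (depth n)"
proof (rule antisym)
  assume "stopped n"
  have "depth m \<le> depth n" for m
    using depth_mono[of m n] stopped_forever[OF \<open>stopped n\<close>, of m] by (cases "m \<le> n") auto
  then show "\<Lambda> \<le> enat (depth n)" unfolding \<Lambda>_def by (intro SUP_least) simp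
qed (rule enat_depth_le_\<Lambda>)

lemma depth_eq_if_never_stopped: "(\<And>n. \<not> stopped n) \<Longrightarrow> depth n = n"
  by (induct n) (use depth_le[of 0] grow in auto)

lemma \<Lambda>_infinite_iff: "\<Lambda> = \<infinity> \<longleftrightarrow> (\<forall>n. \<not> stopped n)"
proof
  assume "\<Lambda> = \<infinity>"
  then show "\<forall>n. \<not> stopped n" using \<Lambda>_eq_if_stopped by auto
next
  assume never: "\<forall>n. \<not> stopped n"
  show "\<Lambda> = \<infinity>"
  proof (rule ccontr)
    assume "\<Lambda> \<noteq> \<infinity>"
    then obtain k where "\<Lambda> = enat k" by auto
    then show False
      using enat_depth_le_\<Lambda>[of "Suc k"] depth_eq_if_never_stopped never by simp
  qed
qed

lemma N_strict_mono: "strict_mono N"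
  unfolding N_def
  using diagonal_subseq_strict_mono[OF partial_decomposition_strict_mono[OF decomposition[of 0]] refine] .

lemma N_eventually_subseq:
  obtains \<tau> where "strict_mono \<tau>" "\<And>n. m \<le> n \<Longrightarrow> N n = \<sigma> m (\<tau> n)"
  using diagonal_subseq_factor[OF partial_decomposition_strict_mono[OF decomposition[of 0]] refine, of m]
  unfolding N_def by blast

lemma weakly_conv_along_N:
  assumes "weakly_conv (\<lambda>k. X (\<sigma> m k)) v"
  shows "weakly_conv (\<lambda>k. X (N k)) v"
proof -
  obtain \<tau> where "strict_mono \<tau>" and \<tau>: "\<And>n. m \<le> n \<Longrightarrow> N n = \<sigma> m (\<tau> n)"
    using N_eventually_subseq by blast
  from weakly_conv_subseq[OF assms this(1)] show ?thesis
    by (rule weakly_conv_eventually_eq[where m = m]) (simp add: \<tau>)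
qed

lemma op_weak_conv_along_N:
  assumes "op_weak_conv (\<lambda>k. H (\<sigma> m k)) 0"
  shows "op_weak_conv (\<lambda>k. H (N k)) 0"
  unfolding op_weak_conv_iff
proof
  fix x
  have "weakly_conv (\<lambda>k. blinfun_apply (H (\<sigma> m k)) x) 0"
    using assms unfolding op_weak_conv_iff by simp
  from weakly_conv_along_N[where X = "\<lambda>j. blinfun_apply (H j) x", OF this]
  show "weakly_conv (\<lambda>k. blinfun_apply (H (N k)) x) (blinfun_apply 0 x)" by simp
qed

lemma profile_nonzero: "1 \<le> l \<Longrightarrow> enat l \<le> \<Lambda> \<Longrightarrow> profile l \<noteq> 0"
  using partial_decomposition_nonzero[OF limit_decomposition] le_\<Lambda>_imp_le_depth by metis

lemma weak_limit_profile:
  assumes "enat l \<le> \<Lambda>"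
  shows "weakly_conv (\<lambda>n. inv (blinfun_apply (dislocation l (N n))) (u (N n))) (profile l)"
proof -
  obtain n where "l \<le> depth n" using le_\<Lambda>_imp_le_depth[OF assms] .
  from weakly_conv_along_N[OF partial_decomposition_weak_limit[OF limit_decomposition this]]
  show ?thesis by (simp add: inv_dislocation dislocation_in_dislocations)
qed

lemma dislocations_asymptotically_orthogonal:
  assumes "enat l \<le> \<Lambda>" "enat m \<le> \<Lambda>" "l \<noteq> m"
  shows "weakly_conv (\<lambda>n. inv (blinfun_apply (dislocation l (N n))) (blinfun_apply (dislocation m (N n)) x)) 0"
proof -
  obtain n1 n2 where "l \<le> depth n1" "m \<le> depth n2"
    using le_\<Lambda>_imp_le_depth assms(1,2) by metis
  then have "l \<le> depth (max n1 n2)" "m \<le> depth (max n1 n2)"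
    using depth_mono[of n1 "max n1 n2"] depth_mono[of n2 "max n1 n2"] by auto
  from op_weak_conv_along_N[OF partial_decomposition_orthogonal[OF limit_decomposition this assms(3)]]
  show ?thesis by (simp add: op_weak_conv_iff inv_dislocation dislocation_in_dislocations)
qed

lemma residual_dislocated_weakly_null:
  assumes "enat L \<le> \<Lambda>" "l \<le> L"
  shows "weakly_conv (\<lambda>n. inv (blinfun_apply (dislocation l (N n)))
    (u (N n) - (\<Sum>k\<le>L. blinfun_apply (dislocation k (N n)) (profile k)))) 0"
proof -
  obtain n where "L \<le> depth n" using le_\<Lambda>_imp_le_depth[OF assms(1)] .
  from weakly_conv_along_N[OF residual_weakly_null[OF limit_decomposition this assms(2)]]
  show ?thesis by (simp add: inv_dislocation dislocation_in_dislocations residual_def)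
qed

definition remainder_size :: "nat \<Rightarrow> ereal" where
  "remainder_size L = (SUP \<phi>\<in>{\<phi>::'a \<Rightarrow>\<^sub>L real. norm \<phi> \<le> 1}.
     limsup (\<lambda>n. SUP h\<in>G. ereal \<bar>blinfun_apply \<phi> (blinfun_apply (ginv h) (residual L dislocation profile (N n)))\<bar>))"

lemma remainder_size_eq: "(SUP \<phi>\<in>{\<phi>::'a \<Rightarrow>\<^sub>L real. norm \<phi> \<le> 1}. limsup (\<lambda>n. SUP h\<in>G. ereal \<bar>blinfun_apply \<phi>
    (inv (blinfun_apply h) (u (N n) - (\<Sum>k\<le>L. blinfun_apply (dislocation k (N n)) (profile k))))\<bar>)) = remainder_size L"
proof -
  have "(SUP h\<in>G. ereal \<bar>blinfun_apply \<phi> (inv (blinfun_apply h) x)\<bar>) =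
      (SUP h\<in>G. ereal \<bar>blinfun_apply \<phi> (blinfun_apply (ginv h) x)\<bar>)" for \<phi> :: "'a \<Rightarrow>\<^sub>L real" and x
    by (rule SUP_cong) (simp_all add: inv_dislocation)
  then show ?thesis unfolding remainder_size_def residual_def by simp
qed

lemma remainder_size_nonneg: "0 \<le> remainder_size L"
  unfolding remainder_size_def using id_in_dislocations by (intro sup_limsup_abs_nonneg) blast

lemma remainder_size_le:
  assumes "\<And>v. v \<in> profiles L (\<sigma> m) dislocation profile \<Longrightarrow> norm v \<le> c"
  shows "remainder_size L \<le> ereal c"
proof -
  obtain \<tau> where "strict_mono \<tau>" and \<tau>: "\<And>n. m \<le> n \<Longrightarrow> N n = \<sigma> m (\<tau> n)"
    using N_eventually_subseq by blast
  show ?thesis unfolding remainder_size_def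
    by (intro SUP_least limsup_dislocated_residual_le[where M = m and g = dislocation and N = N
          and \<sigma> = "\<sigma> m" and L = L and w = profile, OF dislocation_in_dislocations
          \<open>strict_mono \<tau>\<close> \<tau> assms]) auto
qed

lemma remainder_size_finite: "\<Lambda> \<noteq> \<infinity> \<Longrightarrow> remainder_size (the_enat \<Lambda>) = 0"
proof -
  assume "\<Lambda> \<noteq> \<infinity>"
  then have "\<not> (\<forall>n. \<not> stopped n)" using \<Lambda>_infinite_iff by simp
  then obtain n where "stopped n" by blast
  then have "remainder_size (depth n) \<le> ereal 0"
    using limit_profiles[of n] by (intro remainder_size_le[where m = n]) auto
  then have "remainder_size (depth n) = 0" using remainder_size_nonneg[of "depth n"] by (simp add: zero_ereal_def antisym)
  then show ?thesis using \<Lambda>_eq_if_stopped[OF \<open>stopped n\<close>] by simp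
qed

text \<open>Without stopping, every profile in \<open>profiles L\<close> has norm at most \<open>2 \<parallel>profile (Suc L)\<parallel>\<close>.\<close>
lemma remainder_size_tendsto_0:
  assumes "\<Lambda> = \<infinity>" and "(\<lambda>l. norm (profile l)) \<longlonglongrightarrow> 0"
  shows "remainder_size \<longlonglongrightarrow> 0"
proof (rule tendsto_sandwich[OF _ _ tendsto_const])
  have never: "\<not> stopped n" for n using assms(1) \<Lambda>_infinite_iff by blast
  have "remainder_size L \<le> ereal (2 * norm (profile (Suc L)))" for L
  proof (rule remainder_size_le[where m = L])
    fix v assume "v \<in> profiles L (\<sigma> L) dislocation profile"
    then show "norm v \<le> 2 * norm (profile (Suc L))"
      using grow[OF never[of L]] limit_profiles[of L] depth_eq_if_never_stopped[OF never, of L]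
        chain_stable[of "Suc L" "Suc L"] by auto
  qed
  then show "eventually (\<lambda>L. remainder_size L \<le> ereal (2 * norm (profile (Suc L)))) sequentially" by simp
  show "eventually (\<lambda>L. 0 \<le> remainder_size L) sequentially" using remainder_size_nonneg by simp
  have "(\<lambda>L. 2 * norm (profile (Suc L))) \<longlonglongrightarrow> 2 * 0"
    using LIMSEQ_Suc[OF assms(2)] by (intro tendsto_mult tendsto_const)
  then show "(\<lambda>L. ereal (2 * norm (profile (Suc L)))) \<longlonglongrightarrow> 0"
    by (simp add: zero_ereal_def tendsto_ereal)
qed

end

context profile_decomposition
begin

lemma extraction_exists: "\<exists>\<sigma> g w depth. extraction G u \<sigma> g w depth"
proof -
  define P where "P n x \<longleftrightarrow> (case x of (\<sigma>, g, w, L) \<Rightarrow> partial_decomposition L \<sigma> g w \<and> L \<le> n \<and>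
    (L < n \<longrightarrow> profiles L \<sigma> g w \<subseteq> {0}))" for n and x :: "(nat \<Rightarrow> nat) \<times> (nat \<Rightarrow> nat \<Rightarrow> 'a \<Rightarrow>\<^sub>L 'a) \<times> (nat \<Rightarrow> 'a) \<times> nat"
  define Q where "Q n x y \<longleftrightarrow> (case x of (\<sigma>, g, w, L) \<Rightarrow> case y of (\<sigma>', g', w', L') \<Rightarrow>
    (\<exists>t. strict_mono t \<and> \<sigma>' = \<sigma> \<circ> t) \<and> (\<forall>l\<le>n. g' l = g l \<and> w' l = w l) \<and>
    (profiles L \<sigma> g w \<subseteq> {0} \<longrightarrow> \<sigma>' = \<sigma> \<and> g' = g \<and> w' = w \<and> L' = L) \<and>
    (\<not> profiles L \<sigma> g w \<subseteq> {0} \<longrightarrow>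
      L' = Suc L \<and> (\<forall>v\<in>profiles L \<sigma> g w. norm v \<le> 2 * norm (w' (Suc L)))))" for n x y
  have "\<exists>x. P 0 x"
    using initial_partial_decomposition unfolding P_def by auto
  moreover have "\<exists>y. P (Suc n) y \<and> Q n x y" if "P n x" for n x
    using that extraction_step unfolding P_def Q_def by (cases x) fastforce
  ultimately obtain f where f: "\<And>n. P n (f n) \<and> Q n (f n) (f (Suc n))"
    using dependent_nat_choice[of P Q] by blast
  define \<sigma> where "\<sigma> n = fst (f n)" for n
  define g where "g n = fst (snd (f n))" for n
  define w where "w n = fst (snd (snd (f n)))" for n
  define L where "L n = snd (snd (snd (f n)))" for n
  have "f n = (\<sigma> n, g n, w n, L n)" for n unfolding \<sigma>_def g_def w_def L_def by simp
  with f have "P n (\<sigma> n, g n, w n, L n)" "Q n (\<sigma> n, g n, w n, L n) (\<sigma> (Suc n), g (Suc n), w (Suc n), L (Suc n))"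
    for n by metis+
  then have "extraction G u \<sigma> g w L"
    unfolding extraction_def extraction_axioms_def P_def Q_def
    using profile_decomposition_axioms by auto
  then show ?thesis by blast
qed

end

theorem mainTheorem1:
  fixes G :: "('a::banach \<Rightarrow>\<^sub>L 'a) set" and u :: "nat \<Rightarrow> 'a"
  assumes "reflexive_space TYPE('a)"
    and "dislocation_group G"
    and "bounded (range u)"
  shows "\<exists>(\<Lambda>::enat) (N::nat \<Rightarrow> nat) (w::nat \<Rightarrow> 'a) (g::nat \<Rightarrow> nat \<Rightarrow> ('a \<Rightarrow>\<^sub>L 'a)).
    strict_mono N \<and>
    (\<forall>l n. enat l \<le> \<Lambda> \<and> l \<le> n \<longrightarrow> g l n \<in> G) \<and>
    (\<forall>n. g 0 n = id_blinfun) \<and>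
    (\<forall>l. 1 \<le> l \<and> enat l \<le> \<Lambda> \<longrightarrow> w l \<noteq> 0) \<and>
    (\<forall>l m. enat l \<le> \<Lambda> \<and> enat m \<le> \<Lambda> \<and> l \<noteq> m \<longrightarrow>
       (\<forall>x. weakly_conv (\<lambda>n. inv (blinfun_apply (g l n)) (blinfun_apply (g m n) x)) 0)) \<and>
    (\<forall>l. enat l \<le> \<Lambda> \<longrightarrow>
       weakly_conv (\<lambda>n. inv (blinfun_apply (g l n)) (u (N n))) (w l)) \<and>
    (\<forall>L l. enat L \<le> \<Lambda> \<and> l \<le> L \<longrightarrow>
       weakly_conv (\<lambda>n. inv (blinfun_apply (g l n))
          (u (N n) - (\<Sum>k\<le>L. blinfun_apply (g k n) (w k)))) 0) \<and>
    (let Q = (\<lambda>L::nat. SUP \<phi>\<in>{\<phi>::'a \<Rightarrow>\<^sub>L real. norm \<phi> \<le> 1}.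
               limsup (\<lambda>n. SUP h\<in>G. ereal \<bar>blinfun_apply \<phi>
                  (inv (blinfun_apply h) (u (N n) - (\<Sum>k\<le>L. blinfun_apply (g k n) (w k))))\<bar>))
     in (\<Lambda> \<noteq> \<infinity> \<longrightarrow> Q (the_enat \<Lambda>) = 0) \<and>
        (\<Lambda> = \<infinity> \<and> (\<lambda>l. norm (w l)) \<longlonglongrightarrow> 0 \<longrightarrow> Q \<longlonglongrightarrow> 0))"
proof -
  interpret profile_decomposition G u using assms by unfold_locales
  obtain \<sigma> g w depth where "extraction G u \<sigma> g w depth" using extraction_exists by blast
  then interpret extraction G u \<sigma> g w depth .
  show ?thesis
    unfolding Let_def
    by (intro exI[of _ \<Lambda>] exI[of _ N] exI[of _ profile] exI[of _ "\<lambda>l n. dislocation l (N n)"])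
      (use N_strict_mono dislocation_in_dislocations dislocation_0 profile_nonzero
        dislocations_asymptotically_orthogonal weak_limit_profile residual_dislocated_weakly_null
        remainder_size_finite remainder_size_tendsto_0 in \<open>auto simp: remainder_size_eq\<close>)
qed

end
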